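(* Let $f:\mathbb{R}^d\to\mathbb{R}$ be convex, differentiable and $L$-smooth ($L>0$), minimized at $x_*\in\mathbb{R}^d$. Let $x_t,z_t$, $t\ge 0$, be the continuized process (defined in the context) with parameter functions $\eta_t,\eta_t',\gamma_t,\gamma_t'$ and arbitrary initial points $x_0,z_0\in\mathbb{R}^d$. \begin{enumerate} \item If $\eta_t=\frac{2}{t}$, $\eta_t'=0$, $\gamma_t=\frac1L$, $\gamma_t'=\frac{t}{2L}$, then for all $t>0$, $$\mathbb{E} f(x_t)-f(x_* )\le \frac{2L\|z_0-x_*\|^2}{t^2}.$$ \item If moreover $f$ is $\mu$-strongly convex with $\mu>0$, and $\eta_t=\eta_t'\equiv\sqrt{\mu/L}$, $\gamma_t\equiv\frac1L$, $\gamma_t'\equiv\frac{1}{\sqrt{\mu L}}$, then for all $t\ge0$, $$\mathbb{E} f(x_t)-f(x_* )\le\Big(f(x_0)-f(x_* )+\frac{\mu}{2}\|z_0-x_*\|^2\Big)\exp\Big(-\sqrt{\tfrac{\mu}{L}}\,t\Big).$$ \end{enumerate}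
   Context: $f$ is $L$-smooth if $f(y)\le f(x)+\langle\nabla f(x),y-x\rangle+\frac L2\|y-x\|^2$ for all $x,y$, and $\mu$-strongly convex if $f(y)\ge f(x)+\langle\nabla f(x),y-x\rangle+\frac\mu2\|y-x\|^2$ for all $x,y$. Continuized process: let $T_0=0<T_1<T_2<\dots$ be random times such that $T_1,T_2-T_1,T_3-T_2,\dots$ are i.i.d. exponential random variables with rate $1$ (equivalently, $N=\sum_{k\ge1}\delta_{T_k}$ is a homogeneous Poisson point process on $\mathbb{R}_{\ge0}$ with intensity Lebesgue measure). Given functions $\eta_t,\eta'_t,\gamma_t,\gamma'_t$ of $t\ge0$, the processes $t\mapsto x_t,z_t\in\mathbb{R}^d$ are càdlàg (right-continuous with left limits $x_{t-},z_{t-}$), start at $x_0,z_0$, satisfy between consecutive jump times the linear ODE $\frac{d x_t}{dt}=\eta_t(z_t-x_t)$, $\frac{dz_t}{dt}=\eta'_t(x_t-z_t)$, and at each time $T_k$ ($k\ge1$) take gradient steps $x_{T_k}=x_{T_k-}-\gamma_{T_k}\nabla f(x_{T_k-})$, $z_{T_k}=z_{T_k-}-\gamma'_{T_k}\nabla f(x_{T_k-})$. Compactly, $dx_t=\eta_t(z_t-x_t)dt-\gamma_t\nabla f(x_t)dN(t)$, $dz_t=\eta'_t(x_t-z_t)dt-\gamma'_t\nabla f(x_t)dN(t)$. Expectation is over the random times. *)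

theory Defs
  imports "HOL-Analysis.Analysis" "HOL-Probability.Probability"
begin

definition L_smooth :: "real \<Rightarrow> ('a::euclidean_space \<Rightarrow> real) \<Rightarrow> ('a \<Rightarrow> 'a) \<Rightarrow> bool" where
  "L_smooth L f df \<longleftrightarrow>
     (\<forall>x y. f y \<le> f x + df x \<bullet> (y - x) + L / 2 * (norm (y - x))\<^sup>2)"

definition strongly_convex :: "real \<Rightarrow> ('a::euclidean_space \<Rightarrow> real) \<Rightarrow> ('a \<Rightarrow> 'a) \<Rightarrow> bool" where
  "strongly_convex \<mu> f df \<longleftrightarrow>
     (\<forall>x y. f y \<ge> f x + df x \<bullet> (y - x) + \<mu> / 2 * (norm (y - x))\<^sup>2)"

definition poisson_jump_times :: "'w measure \<Rightarrow> (nat \<Rightarrow> 'w \<Rightarrow> real) \<Rightarrow> bool" where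
  "poisson_jump_times M T \<longleftrightarrow>
     (\<forall>w\<in>space M. T 0 w = 0) \<and>
     prob_space.indep_vars M (\<lambda>_. borel) (\<lambda>k w. T (Suc k) w - T k w) UNIV \<and>
     (\<forall>k. distributed M lborel (\<lambda>w. T (Suc k) w - T k w) (exponential_density 1))"

definition valid_jump_times :: "(nat \<Rightarrow> real) \<Rightarrow> bool" where
  "valid_jump_times \<tau> \<longleftrightarrow> \<tau> 0 = 0 \<and> strict_mono \<tau> \<and> filterlim \<tau> at_top sequentially"

definition continuized_path ::
  "(real \<Rightarrow> real) \<Rightarrow> (real \<Rightarrow> real) \<Rightarrow> (real \<Rightarrow> real) \<Rightarrow> (real \<Rightarrow> real) \<Rightarrow>
   ('a::euclidean_space \<Rightarrow> 'a) \<Rightarrow> 'a \<Rightarrow> 'a \<Rightarrow> (nat \<Rightarrow> real) \<Rightarrow> (real \<Rightarrow> 'a) \<Rightarrow> (real \<Rightarrow> 'a) \<Rightarrow> bool"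
  where
  "continuized_path \<eta> \<eta>' \<gamma> \<gamma>' df x0 z0 \<tau> x z \<longleftrightarrow>
     x 0 = x0 \<and> z 0 = z0 \<and>
     (\<forall>k. continuous_on {\<tau> k..<\<tau> (Suc k)} x \<and> continuous_on {\<tau> k..<\<tau> (Suc k)} z \<and>
          (\<forall>t\<in>{\<tau> k<..<\<tau> (Suc k)}.
              (x has_vector_derivative (\<eta> t *\<^sub>R (z t - x t))) (at t) \<and>
              (z has_vector_derivative (\<eta>' t *\<^sub>R (x t - z t))) (at t))) \<and>
     (\<forall>k\<ge>1. \<exists>xl zl. (x \<longlongrightarrow> xl) (at_left (\<tau> k)) \<and> (z \<longlongrightarrow> zl) (at_left (\<tau> k)) \<and>
          x (\<tau> k) = xl - \<gamma> (\<tau> k) *\<^sub>R df xl \<and>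
          z (\<tau> k) = zl - \<gamma>' (\<tau> k) *\<^sub>R df xl)"

definition continuized_process ::
  "'w measure \<Rightarrow> (nat \<Rightarrow> 'w \<Rightarrow> real) \<Rightarrow>
   (real \<Rightarrow> real) \<Rightarrow> (real \<Rightarrow> real) \<Rightarrow> (real \<Rightarrow> real) \<Rightarrow> (real \<Rightarrow> real) \<Rightarrow>
   ('a::euclidean_space \<Rightarrow> 'a) \<Rightarrow> 'a \<Rightarrow> 'a \<Rightarrow> ('w \<Rightarrow> real \<Rightarrow> 'a) \<Rightarrow> ('w \<Rightarrow> real \<Rightarrow> 'a) \<Rightarrow> bool"
  where
  "continuized_process M T \<eta> \<eta>' \<gamma> \<gamma>' df x0 z0 X Z \<longleftrightarrow>
     (AE w in M. valid_jump_times (\<lambda>k. T k w) \<longrightarrow>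
        continuized_path \<eta> \<eta>' \<gamma> \<gamma>' df x0 z0 (\<lambda>k. T k w) (X w) (Z w))"

end

theory Submission
  imports Defs
begin

text \<open>Both bounds come from a Lyapunov function that is a supermartingale along the process:
  \<open>\<phi> t (x, z) = t\<^sup>2 (f x - f xs) + 2 L \<parallel>z - xs\<parallel>\<^sup>2\<close> in the convex case and
  \<open>\<phi> t (x, z) = exp (\<surd>(\<mu>/L) t) (f x - f xs + \<mu>/2 \<parallel>z - xs\<parallel>\<^sup>2)\<close> in the strongly convex case.
  Smoothness and (strong) convexity show that the derivative of \<open>\<phi>\<close> along the flow plus the
  change of \<open>\<phi>\<close> caused by a gradient step is nonpositive. Integrated against the exponential
  holding time, this generator inequality says that \<open>\<phi>\<close> does not increase in expectation
  up to the next jump. Iterating over the jumps, of which almost surely only finitely many occur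
  before time \<open>t\<close>, gives \<open>E \<phi> t (x\<^sub>t, z\<^sub>t) \<le> \<phi> 0 (x\<^sub>0, z\<^sub>0)\<close>, and \<open>f x\<^sub>t - f xs\<close> is at most
  \<open>\<phi> t (x\<^sub>t, z\<^sub>t) / t\<^sup>2\<close>, respectively \<open>exp (- \<surd>(\<mu>/L) t) \<phi> t (x\<^sub>t, z\<^sub>t)\<close>.\<close>

section \<open>Exponential holding times\<close>

abbreviation exponential1 :: "real measure" where
  "exponential1 \<equiv> density lborel (\<lambda>x. ennreal (exponential_density 1 x))"

lemma prob_space_exponential1: "prob_space exponential1"
  by (rule prob_space_exponential_density) simp

lemma AE_exponential1_pos: "AE e in exponential1. 0 < e"
proof (subst AE_density)
  show "AE x in lborel. 0 < ennreal (exponential_density 1 x) \<longrightarrow> 0 < x"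
    using AE_lborel_singleton[of 0]
    by eventually_elim (auto simp: exponential_density_def split: if_splits)
qed measurable

lemma nn_integral_exponential1_tail:
  assumes "0 \<le> T"
  shows "(\<integral>\<^sup>+e. indicator {T<..} e \<partial>exponential1) = ennreal (exp (-T))"
proof -
  have "(\<integral>\<^sup>+e. indicator {T<..} e \<partial>exponential1)
      = (\<integral>\<^sup>+e. ennreal (exponential_density 1 e) * indicator {T<..} e \<partial>lborel)"
    by (subst nn_integral_density) auto
  also have "\<dots> = (\<integral>\<^sup>+e. ennreal (exp (-e)) * indicator {T..} e \<partial>lborel)"
    using AE_lborel_singleton[of T]
    by (intro nn_integral_cong_AE, eventually_elim)
       (use assms in \<open>auto simp: exponential_density_def indicator_def\<close>)
  also have "\<dots> = ennreal (exp (-T))"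
    using has_integral_exp_minus_to_infinity[of 1 T] by (intro nn_integral_has_integral_lebesgue') auto
  finally show ?thesis .
qed

lemma nn_integral_exponential1_interval:
  fixes g :: "real \<Rightarrow> real"
  assumes g: "\<And>e. e \<in> {0..T} \<Longrightarrow> 0 \<le> g e" and gc: "continuous_on {0..T} g"
  shows "(\<integral>\<^sup>+e. ennreal (indicator {0..T} e * g e) \<partial>exponential1)
       = ennreal (integral {0..T} (\<lambda>e. exp (-e) * g e))"
proof -
  have [measurable]: "(\<lambda>e. indicator {0..T} e * g e) \<in> borel_measurable borel"
    using borel_measurable_continuous_on_indicator[OF _ gc] by simp
  have "(\<integral>\<^sup>+e. ennreal (indicator {0..T} e * g e) \<partial>exponential1)
      = (\<integral>\<^sup>+e. ennreal (exponential_density 1 e) * ennreal (indicator {0..T} e * g e) \<partial>lborel)"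
    by (subst nn_integral_density) simp_all
  also have "\<dots> = (\<integral>\<^sup>+e. ennreal (exp (-e) * g e) * indicator {0..T} e \<partial>lborel)"
    using g by (intro nn_integral_cong)
      (auto simp: exponential_density_def indicator_def ennreal_mult[symmetric])
  also have "\<dots> = ennreal (integral {0..T} (\<lambda>e. exp (-e) * g e))"
    using g by (intro nn_integral_has_integral_lebesgue' integrable_integral integrable_continuous_interval
        continuous_intros gc) auto
  finally show ?thesis .
qed

lemma nn_integral_exponential1_clock:
  fixes g :: "real \<Rightarrow> real"
  assumes c: "0 \<le> c" and T: "0 \<le> T" and g: "\<And>e. e \<in> {0..T} \<Longrightarrow> 0 \<le> g e"
    and gc: "continuous_on {0..T} g"
  shows "(\<integral>\<^sup>+e. (if T < e then ennreal c else ennreal (g e)) \<partial>exponential1)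
       = ennreal (c * exp (-T) + integral {0..T} (\<lambda>e. exp (-e) * g e))"
proof -
  have [measurable]: "(\<lambda>e. indicator {0..T} e * g e) \<in> borel_measurable borel"
    using borel_measurable_continuous_on_indicator[OF _ gc] by simp
  have "(\<integral>\<^sup>+e. (if T < e then ennreal c else ennreal (g e)) \<partial>exponential1)
      = (\<integral>\<^sup>+e. ennreal c * indicator {T<..} e + ennreal (indicator {0..T} e * g e) \<partial>exponential1)"
    using AE_exponential1_pos by (intro nn_integral_cong_AE, eventually_elim) (auto simp: indicator_def)
  also have "\<dots> = ennreal c * (\<integral>\<^sup>+e. indicator {T<..} e \<partial>exponential1)
      + (\<integral>\<^sup>+e. ennreal (indicator {0..T} e * g e) \<partial>exponential1)"
    by (simp add: nn_integral_add nn_integral_cmult)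
  also have "\<dots> = ennreal c * ennreal (exp (-T)) + ennreal (integral {0..T} (\<lambda>e. exp (-e) * g e))"
    by (simp only: nn_integral_exponential1_tail[OF T] nn_integral_exponential1_interval[OF g gc])
  also have "\<dots> = ennreal (c * exp (-T) + integral {0..T} (\<lambda>e. exp (-e) * g e))"
  proof -
    have "0 \<le> integral {0..T} (\<lambda>e. exp (-e) * g e)"
      using g by (intro integral_nonneg integrable_continuous_interval continuous_intros gc) auto
    then show ?thesis using c by (simp add: ennreal_plus ennreal_mult)
  qed
  finally show ?thesis .
qed

lemma nn_integral_exponential1_exp_neg: "(\<integral>\<^sup>+e. ennreal (exp (- e)) \<partial>exponential1) = ennreal (1/2)"
proof -
  have "(\<integral>\<^sup>+e. ennreal (exp (- e)) \<partial>exponential1)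
      = (\<integral>\<^sup>+e. ennreal (exponential_density 1 e) * ennreal (exp (- e)) \<partial>lborel)"
    by (subst nn_integral_density) auto
  also have "\<dots> = (\<integral>\<^sup>+e. ennreal (exp (- 2 * e)) * indicator {0..} e \<partial>lborel)"
    by (intro nn_integral_cong)
       (auto simp: exponential_density_def indicator_def ennreal_mult[symmetric] exp_add[symmetric])
  also have "\<dots> = ennreal (1/2)"
    using has_integral_exp_minus_to_infinity[of 2 0] by (intro nn_integral_has_integral_lebesgue') auto
  finally show ?thesis .
qed

lemma nn_integral_stream_exp_neg_sum:
  "(\<integral>\<^sup>+\<omega>. ennreal (exp (- (\<Sum>k<n. \<omega> !! k))) \<partial>stream_space exponential1) = ennreal ((1/2) ^ n)"
proof (induction n)
  interpret E: prob_space exponential1 by (rule prob_space_exponential1)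
  interpret S: prob_space "stream_space exponential1" by (rule E.prob_space_stream_space)
  {
    case 0
    show ?case by (simp add: S.emeasure_space_1)
  next
    case (Suc n)
    have "(\<integral>\<^sup>+\<omega>. ennreal (exp (- (\<Sum>k<Suc n. \<omega> !! k))) \<partial>stream_space exponential1)
        = (\<integral>\<^sup>+e. (\<integral>\<^sup>+\<omega>. ennreal (exp (- e)) * ennreal (exp (- (\<Sum>k<n. \<omega> !! k)))
            \<partial>stream_space exponential1) \<partial>exponential1)"
      by (subst E.nn_integral_stream_space) (auto simp del: sum.lessThan_Suc
          simp: sum.lessThan_Suc_shift ennreal_mult[symmetric] exp_add[symmetric])
    also have "\<dots> = (\<integral>\<^sup>+e. ennreal (exp (- e)) \<partial>exponential1) * ennreal ((1/2) ^ n)"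
      using Suc.IH by (simp add: nn_integral_cmult nn_integral_multc)
    also have "\<dots> = ennreal ((1/2) ^ Suc n)"
      by (subst power_Suc, subst ennreal_mult) (simp_all add: nn_integral_exponential1_exp_neg)
    finally show ?case .
  }
qed

text \<open>By Markov's inequality and the previous lemma, the partial sums up to \<open>n\<close> stay below \<open>m\<close>
  with probability at most \<open>exp m / 2\<^sup>n\<close>.\<close>
lemma AE_stream_sum_unbounded:
  "AE \<omega> in stream_space exponential1. \<forall>m::nat. \<exists>n. real m < (\<Sum>k<n. \<omega> !! k)"
proof (rule AE_all_countable[THEN iffD2], rule allI)
  fix m :: nat
  define N where "N = {\<omega> \<in> space (stream_space exponential1). \<forall>n. (\<Sum>k<n. \<omega> !! k) \<le> real m}"
  have N: "N \<in> sets (stream_space exponential1)" unfolding N_def by measurable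
  have bound: "emeasure (stream_space exponential1) N \<le> ennreal (exp (real m) * (1/2) ^ n)" for n
  proof -
    have "emeasure (stream_space exponential1) N = (\<integral>\<^sup>+\<omega>. indicator N \<omega> \<partial>stream_space exponential1)"
      using N by simp
    also have "\<dots> \<le> (\<integral>\<^sup>+\<omega>. ennreal (exp (real m)) * ennreal (exp (- (\<Sum>k<n. \<omega> !! k)))
        \<partial>stream_space exponential1)"
    proof (intro nn_integral_mono)
      fix \<omega> :: "real stream"
      have "\<omega> \<in> N \<Longrightarrow> 1 \<le> exp (real m) * exp (- (\<Sum>k<n. \<omega> !! k))"
        by (auto simp: N_def exp_add[symmetric])
      then show "indicator N \<omega> \<le> ennreal (exp (real m)) * ennreal (exp (- (\<Sum>k<n. \<omega> !! k)))"
        by (auto simp: indicator_def ennreal_mult[symmetric])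
    qed
    also have "\<dots> = ennreal (exp (real m) * (1/2) ^ n)"
      by (simp add: nn_integral_cmult nn_integral_stream_exp_neg_sum ennreal_mult)
    finally show ?thesis .
  qed
  have "(\<lambda>n. ennreal (exp (real m) * (1/2) ^ n)) \<longlonglongrightarrow> ennreal 0"
    by (intro tendsto_ennrealI tendsto_mult_right_zero LIMSEQ_power_zero) simp
  then have "emeasure (stream_space exponential1) N \<le> ennreal 0"
    by (rule tendsto_le[OF sequentially_bot _ tendsto_const]) (use bound in auto)
  then have "N \<in> null_sets (stream_space exponential1)" using N by (simp add: null_sets_def)
  then show "AE \<omega> in stream_space exponential1. \<exists>n. real m < (\<Sum>k<n. \<omega> !! k)"
    by (rule AE_I') (auto simp: N_def not_less)
qed

definition jump_increments :: "(nat \<Rightarrow> 'w \<Rightarrow> real) \<Rightarrow> 'w \<Rightarrow> real stream" where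
  "jump_increments T w = to_stream (\<lambda>k. T (Suc k) w - T k w)"

lemma snth_jump_increments [simp]: "jump_increments T w !! k = T (Suc k) w - T k w"
  by (simp add: jump_increments_def to_stream_def)

lemma
  assumes "prob_space M" and "poisson_jump_times M T"
  shows measurable_jump_increments: "jump_increments T \<in> measurable M (stream_space exponential1)"
    and distr_jump_increments: "distr M (stream_space exponential1) (jump_increments T) = stream_space exponential1"
proof -
  interpret prob_space M by fact
  define E where "E k w = T (Suc k) w - T k w" for k w
  have E: "distributed M lborel (E k) (exponential_density 1)" for k
    using assms(2) unfolding poisson_jump_times_def E_def by auto
  have E_borel: "random_variable borel (E k)" for k
    using E unfolding distributed_def by (simp add: measurable_lborel1)
  have E_indep: "indep_vars (\<lambda>_. borel) E UNIV"
    using assms(2) unfolding poisson_jump_times_def E_def[abs_def] by auto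
  have E_distr: "distr M borel (E k) = exponential1" for k
  proof -
    have "distr M borel (E k) = distr M lborel (E k)"
      by (rule distr_cong) auto
    also have "\<dots> = exponential1" using E[of k] unfolding distributed_def by simp
    finally show ?thesis .
  qed
  have E_meas: "(\<lambda>w. \<lambda>k\<in>UNIV. E k w) \<in> measurable M (\<Pi>\<^sub>M k\<in>UNIV. exponential1)"
  proof (rule measurable_restrict)
    show "E k \<in> measurable M exponential1" for k
      using E_borel[of k] by (subst measurable_cong_sets[where M'=M and N'=borel]) auto
  qed
  have "distr M (\<Pi>\<^sub>M k\<in>UNIV. exponential1) (\<lambda>w. \<lambda>k\<in>UNIV. E k w)
      = distr M (\<Pi>\<^sub>M k\<in>UNIV. borel) (\<lambda>w. \<lambda>k\<in>UNIV. E k w)"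
    by (rule distr_cong) (auto intro!: sets_PiM_cong)
  also have "\<dots> = (\<Pi>\<^sub>M k\<in>UNIV. exponential1)"
    using indep_vars_iff_distr_eq_PiM[where I=UNIV and M'="\<lambda>_. borel" and X=E] E_borel E_indep
    by (simp add: E_distr)
  finally have E_PiM:
    "distr M (\<Pi>\<^sub>M k\<in>UNIV. exponential1) (\<lambda>w. \<lambda>k\<in>UNIV. E k w) = (\<Pi>\<^sub>M k\<in>UNIV. exponential1)" .
  have incr: "jump_increments T = to_stream \<circ> (\<lambda>w. \<lambda>k\<in>UNIV. E k w)"
    by (simp add: fun_eq_iff jump_increments_def E_def restrict_UNIV)
  show "jump_increments T \<in> measurable M (stream_space exponential1)"
    unfolding incr by (rule measurable_comp[OF E_meas measurable_to_stream])
  show "distr M (stream_space exponential1) (jump_increments T) = stream_space exponential1"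
    unfolding incr distr_distr[symmetric, OF measurable_to_stream E_meas] E_PiM
    by (rule stream_space_eq_distr[symmetric])
qed

lemma valid_jump_times_less_Suc: "valid_jump_times \<tau> \<Longrightarrow> \<tau> k < \<tau> (Suc k)"
  by (simp add: valid_jump_times_def strict_mono_Suc_iff)

lemma valid_jump_times_nonneg: "valid_jump_times \<tau> \<Longrightarrow> 0 \<le> \<tau> k"
  using strict_mono_less_eq[of \<tau> 0 k] by (simp add: valid_jump_times_def)

lemma valid_jump_timesI:
  assumes "\<tau> 0 = 0" and "\<And>k. \<tau> k < \<tau> (Suc k)" and "\<And>m::nat. \<exists>n. real m < \<tau> n"
  shows "valid_jump_times \<tau>"
proof -
  have mono: "strict_mono \<tau>" using assms(2) by (rule strict_monoI_Suc)
  have "filterlim \<tau> at_top sequentially"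
    unfolding filterlim_at_top eventually_sequentially
  proof
    fix r :: real
    obtain m :: nat where "r < real m" using reals_Archimedean2 by blast
    moreover obtain n where "real m < \<tau> n" using assms(3) by blast
    ultimately have "r < \<tau> n" by linarith
    then show "\<exists>n. \<forall>k\<ge>n. r \<le> \<tau> k"
      using strict_mono_less_eq[OF mono] by (metis order.trans less_imp_le)
  qed
  with mono assms(1) show ?thesis by (simp add: valid_jump_times_def)
qed

lemma AE_valid_jump_times:
  assumes "prob_space M" and "poisson_jump_times M T"
  shows "AE w in M. valid_jump_times (\<lambda>k. T k w)"
proof -
  interpret E: prob_space exponential1 by (rule prob_space_exponential1)
  define good where "good \<omega> \<longleftrightarrow> (\<forall>k. 0 < \<omega> !! k) \<and> (\<forall>m::nat. \<exists>n. real m < (\<Sum>k<n. \<omega> !! k))"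
    for \<omega> :: "real stream"
  have "AE \<omega> in stream_space exponential1. stream_all (\<lambda>e. 0 < e) \<omega>"
    by (rule E.AE_stream_all[OF _ AE_exponential1_pos]) measurable
  then have "AE \<omega> in stream_space exponential1. good \<omega>"
    using AE_stream_sum_unbounded by eventually_elim (auto simp: good_def sset_range)
  then have "AE \<omega> in distr M (stream_space exponential1) (jump_increments T). good \<omega>"
    by (simp only: distr_jump_increments[OF assms])
  moreover have "{\<omega> \<in> space (stream_space exponential1). good \<omega>} \<in> sets (stream_space exponential1)"
    unfolding good_def by measurable
  ultimately have "AE w in M. good (jump_increments T w)"
    by (simp add: AE_distr_iff[OF measurable_jump_increments[OF assms]])
  moreover have "AE w in M. T 0 w = 0"
    using assms(2) by (intro AE_I2) (simp add: poisson_jump_times_def)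
  ultimately show ?thesis
  proof eventually_elim
    case (elim w)
    have "(\<Sum>k<n. jump_increments T w !! k) = T n w" for n
      using sum_lessThan_telescope[of "\<lambda>k. T k w" n] elim by simp
    with elim show ?case
      by (intro valid_jump_timesI) (auto simp: good_def)
  qed
qed

section \<open>Piecewise deterministic processes\<close>

text \<open>The value at time \<open>t\<close> of a piecewise deterministic process started in state \<open>p\<close> at
  time \<open>s\<close>: it follows the flow \<open>Fl\<close> between jumps, is mapped by \<open>J\<close> at each jump, and
  \<open>\<omega>\<close> lists its holding times. The result is \<open>\<phi> t\<close> of the state at time \<open>t\<close>, truncated to \<open>0\<close>
  when more than \<open>n\<close> jumps happen before \<open>t\<close>.\<close>
fun pdp_value :: "(real \<Rightarrow> 'b \<Rightarrow> real) \<Rightarrow> (real \<Rightarrow> real \<Rightarrow> 'b \<Rightarrow> 'b) \<Rightarrow> (real \<Rightarrow> 'b \<Rightarrow> 'b) \<Rightarrow>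
    real \<Rightarrow> nat \<Rightarrow> real \<Rightarrow> 'b \<Rightarrow> real stream \<Rightarrow> ennreal" where
  "pdp_value \<phi> Fl J t 0 s p \<omega> =
     (if t < s + shd \<omega> then ennreal (\<phi> t (Fl s t p)) else 0)"
| "pdp_value \<phi> Fl J t (Suc n) s p \<omega> =
     (if t < s + shd \<omega> then ennreal (\<phi> t (Fl s t p))
      else pdp_value \<phi> Fl J t n (s + shd \<omega>) (J (s + shd \<omega>) (Fl s (s + shd \<omega>) p)) (stl \<omega>))"

lemma pdp_value_mono: "pdp_value \<phi> Fl J t n s p \<omega> \<le> pdp_value \<phi> Fl J t (Suc n) s p \<omega>"
  by (induction n arbitrary: s p \<omega>) auto

definition pdp_path_at ::
    "(real \<Rightarrow> real \<Rightarrow> 'b \<Rightarrow> 'b) \<Rightarrow> (real \<Rightarrow> 'b \<Rightarrow> 'b) \<Rightarrow> 'b \<Rightarrow> (nat \<Rightarrow> real) \<Rightarrow> (real \<Rightarrow> 'b) \<Rightarrow> real \<Rightarrow> bool"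
  where "pdp_path_at Fl J p0 \<tau> Y t \<longleftrightarrow> Y 0 = p0 \<and>
    (\<forall>k. Y (\<tau> (Suc k)) = J (\<tau> (Suc k)) (Fl (\<tau> k) (\<tau> (Suc k)) (Y (\<tau> k)))) \<and>
    (\<forall>k. \<tau> k \<le> t \<longrightarrow> t < \<tau> (Suc k) \<longrightarrow> Y t = Fl (\<tau> k) t (Y (\<tau> k)))"

lemma pdp_value_path:
  assumes "pdp_path_at Fl J p0 \<tau> Y t"
  shows "\<tau> j \<le> t \<Longrightarrow> t < \<tau> (j + n + 1) \<Longrightarrow>
    pdp_value \<phi> Fl J t n (\<tau> j) (Y (\<tau> j)) (sdrop j (to_stream (\<lambda>k. \<tau> (Suc k) - \<tau> k)))
      = ennreal (\<phi> t (Y t))"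
proof (induction n arbitrary: j)
  case 0
  then show ?case using assms by (simp add: pdp_path_at_def to_stream_def)
next
  case (Suc n)
  show ?case
  proof (cases "t < \<tau> (Suc j)")
    case True
    then show ?thesis using assms Suc.prems by (simp add: pdp_path_at_def to_stream_def)
  next
    case False
    then show ?thesis using assms Suc.IH[of "Suc j"] Suc.prems by (simp add: pdp_path_at_def to_stream_def)
  qed
qed

lemma pdp_path_at_pdp_value:
  assumes valid: "valid_jump_times \<tau>" and path: "pdp_path_at Fl J p0 \<tau> Y t" and t: "0 \<le> t"
  shows "\<exists>n. pdp_value \<phi> Fl J t n 0 p0 (to_stream (\<lambda>k. \<tau> (Suc k) - \<tau> k)) = ennreal (\<phi> t (Y t))"
proof -
  have "\<forall>\<^sub>F k in sequentially. t < \<tau> k"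
    using valid unfolding valid_jump_times_def filterlim_at_top_dense by blast
  then obtain n where n: "t < \<tau> n" by (auto simp: eventually_sequentially)
  have "pdp_value \<phi> Fl J t n (\<tau> 0) (Y (\<tau> 0)) (sdrop 0 (to_stream (\<lambda>k. \<tau> (Suc k) - \<tau> k)))
      = ennreal (\<phi> t (Y t))"
    using t n valid
    by (intro pdp_value_path[OF path])
       (auto simp: valid_jump_times_def strict_mono_Suc_iff intro: less_trans)
  then show ?thesis
    using path valid by (auto simp: pdp_path_at_def valid_jump_times_def)
qed

definition supermartingale_step ::
    "(real \<Rightarrow> 'b \<Rightarrow> real) \<Rightarrow> (real \<Rightarrow> real \<Rightarrow> 'b \<Rightarrow> 'b) \<Rightarrow> (real \<Rightarrow> 'b \<Rightarrow> 'b) \<Rightarrow> real \<Rightarrow> bool" where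
  "supermartingale_step \<phi> Fl J t \<longleftrightarrow> (\<forall>s p. 0 \<le> s \<longrightarrow> s \<le> t \<longrightarrow>
     (\<integral>\<^sup>+e. (if t < s + e then ennreal (\<phi> t (Fl s t p))
              else ennreal (\<phi> (s + e) (J (s + e) (Fl s (s + e) p)))) \<partial>exponential1)
       \<le> ennreal (\<phi> s p))"

context
  fixes \<phi> :: "real \<Rightarrow> 'b::euclidean_space \<Rightarrow> real" and Fl :: "real \<Rightarrow> real \<Rightarrow> 'b \<Rightarrow> 'b"
    and J :: "real \<Rightarrow> 'b \<Rightarrow> 'b" and t :: real
  assumes flow_measurable: "(\<lambda>q. \<phi> t (Fl (fst q) t (snd q))) \<in> borel_measurable (borel \<Otimes>\<^sub>M borel)"
    and jump_measurable: "(\<lambda>q. (fst (fst q) + snd q,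
        J (fst (fst q) + snd q) (Fl (fst (fst q)) (fst (fst q) + snd q) (snd (fst q)))))
      \<in> (borel \<Otimes>\<^sub>M borel) \<Otimes>\<^sub>M borel \<rightarrow>\<^sub>M borel \<Otimes>\<^sub>M borel"
begin

lemma measurable_pdp_value:
  "(\<lambda>q. pdp_value \<phi> Fl J t n (fst (fst q)) (snd (fst q)) (snd q))
     \<in> borel_measurable ((borel \<Otimes>\<^sub>M borel) \<Otimes>\<^sub>M stream_space exponential1)"
proof (induction n)
  let ?N = "((borel :: real measure) \<Otimes>\<^sub>M (borel :: 'b measure)) \<Otimes>\<^sub>M stream_space exponential1"
  have [measurable]: "(\<lambda>q. \<phi> t (Fl (fst (fst q)) t (snd (fst q)))) \<in> borel_measurable ?N"
    by (rule measurable_compose[OF measurable_fst flow_measurable])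
  have [measurable]: "(\<lambda>q. shd (snd q)) \<in> borel_measurable ?N"
    using measurable_compose[OF measurable_snd measurable_shd] by (simp cong: measurable_cong_sets)
  {
    case 0
    show ?case by simp
  next
    case (Suc n)
    have [measurable]: "(\<lambda>q. stl (snd q)) \<in> ?N \<rightarrow>\<^sub>M stream_space exponential1"
      by measurable
    have "(\<lambda>q. (fst q, shd (snd q))) \<in> ?N \<rightarrow>\<^sub>M (borel \<Otimes>\<^sub>M borel) \<Otimes>\<^sub>M borel"
      by measurable
    from measurable_compose[OF this jump_measurable]
    have [measurable]: "(\<lambda>q. (fst (fst q) + shd (snd q), J (fst (fst q) + shd (snd q))
        (Fl (fst (fst q)) (fst (fst q) + shd (snd q)) (snd (fst q))))) \<in> ?N \<rightarrow>\<^sub>M borel \<Otimes>\<^sub>M borel"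
      by simp
    have "(\<lambda>q. ((fst (fst q) + shd (snd q), J (fst (fst q) + shd (snd q))
        (Fl (fst (fst q)) (fst (fst q) + shd (snd q)) (snd (fst q)))), stl (snd q))) \<in> ?N \<rightarrow>\<^sub>M ?N"
      by measurable
    from measurable_compose[OF this Suc.IH]
    have [measurable]: "(\<lambda>q. pdp_value \<phi> Fl J t n (fst (fst q) + shd (snd q))
        (J (fst (fst q) + shd (snd q)) (Fl (fst (fst q)) (fst (fst q) + shd (snd q)) (snd (fst q))))
        (stl (snd q))) \<in> borel_measurable ?N"
      by simp
    show ?case by simp
  }
qed

lemma measurable_pdp_value_stream:
  "pdp_value \<phi> Fl J t n s p \<in> borel_measurable (stream_space exponential1)"
proof -
  have "(\<lambda>\<omega>. ((s, p), \<omega>)) \<in> stream_space exponential1 \<rightarrow>\<^sub>M (borel \<Otimes>\<^sub>M borel) \<Otimes>\<^sub>M stream_space exponential1"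
    by measurable
  from measurable_compose[OF this measurable_pdp_value] show ?thesis by simp
qed

lemma nn_integral_pdp_value_le:
  assumes nonneg: "\<And>u p. 0 \<le> \<phi> u p" and step: "supermartingale_step \<phi> Fl J t"
  shows "0 \<le> s \<Longrightarrow> s \<le> t \<Longrightarrow>
    (\<integral>\<^sup>+\<omega>. pdp_value \<phi> Fl J t n s p \<omega> \<partial>stream_space exponential1) \<le> ennreal (\<phi> s p)"
proof (induction n arbitrary: s p)
  interpret E: prob_space exponential1 by (rule prob_space_exponential1)
  interpret S: prob_space "stream_space exponential1" by (rule E.prob_space_stream_space)
  have split: "(\<integral>\<^sup>+\<omega>. pdp_value \<phi> Fl J t m s p \<omega> \<partial>stream_space exponential1)
     = (\<integral>\<^sup>+e. (\<integral>\<^sup>+\<omega>. pdp_value \<phi> Fl J t m s p (e ## \<omega>) \<partial>stream_space exponential1) \<partial>exponential1)"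
    for m s p
    by (rule E.nn_integral_stream_space[OF measurable_pdp_value_stream])
  let ?step = "\<lambda>s p e. if t < s + e then ennreal (\<phi> t (Fl s t p))
                else ennreal (\<phi> (s + e) (J (s + e) (Fl s (s + e) p)))"
  {
    case 0
    have "(\<integral>\<^sup>+\<omega>. pdp_value \<phi> Fl J t 0 s p \<omega> \<partial>stream_space exponential1)
        \<le> (\<integral>\<^sup>+e. ?step s p e \<partial>exponential1)"
      unfolding split by (intro nn_integral_mono) (auto simp: S.emeasure_space_1)
    also have "\<dots> \<le> ennreal (\<phi> s p)" using step 0 by (simp add: supermartingale_step_def)
    finally show ?case .
  next
    case (Suc n)
    have "(\<integral>\<^sup>+\<omega>. pdp_value \<phi> Fl J t (Suc n) s p \<omega> \<partial>stream_space exponential1)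
        \<le> (\<integral>\<^sup>+e. ?step s p e \<partial>exponential1)"
      unfolding split
    proof (intro nn_integral_mono_AE)
      show "AE e in exponential1.
          (\<integral>\<^sup>+\<omega>. pdp_value \<phi> Fl J t (Suc n) s p (e ## \<omega>) \<partial>stream_space exponential1) \<le> ?step s p e"
        using AE_exponential1_pos
        by eventually_elim (use Suc in \<open>auto simp: S.emeasure_space_1\<close>)
    qed
    also have "\<dots> \<le> ennreal (\<phi> s p)" using step Suc.prems by (simp add: supermartingale_step_def)
    finally show ?case .
  }
qed

text \<open>The constant \<open>C\<close> cannot be pulled out of the integral afterwards, since the path \<open>Y\<close>
  need not be measurable.\<close>
lemma nn_integral_pdp_le:
  fixes Y :: "'w \<Rightarrow> real \<Rightarrow> 'b"
  assumes "prob_space M" and "poisson_jump_times M T" and t: "0 \<le> t" and C: "0 \<le> C"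
    and nonneg: "\<And>u p. 0 \<le> \<phi> u p" and step: "supermartingale_step \<phi> Fl J t"
    and paths: "AE w in M. valid_jump_times (\<lambda>k. T k w) \<longrightarrow> pdp_path_at Fl J p0 (\<lambda>k. T k w) (Y w) t"
  shows "(\<integral>\<^sup>+w. ennreal (C * \<phi> t (Y w t)) \<partial>M) \<le> ennreal (C * \<phi> 0 p0)"
proof -
  define W where "W \<omega> = (SUP n. pdp_value \<phi> Fl J t n 0 p0 \<omega>)" for \<omega>
  have W_meas: "W \<in> borel_measurable (stream_space exponential1)"
    unfolding W_def by (rule borel_measurable_SUP) (auto intro: measurable_pdp_value_stream)
  note incr_meas = measurable_jump_increments[OF assms(1,2)]
  have "AE w in M. ennreal (\<phi> t (Y w t)) \<le> W (jump_increments T w)"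
    using paths AE_valid_jump_times[OF assms(1,2)]
  proof eventually_elim
    case (elim w)
    then obtain n where "pdp_value \<phi> Fl J t n 0 p0 (jump_increments T w) = ennreal (\<phi> t (Y w t))"
      using pdp_path_at_pdp_value[where \<tau>="\<lambda>k. T k w" and Y="Y w" and \<phi>=\<phi>, OF _ _ t]
      unfolding jump_increments_def by blast
    then show ?case
      unfolding W_def by (metis SUP_upper UNIV_I)
  qed
  then have "(\<integral>\<^sup>+w. ennreal (C * \<phi> t (Y w t)) \<partial>M) \<le> (\<integral>\<^sup>+w. ennreal C * W (jump_increments T w) \<partial>M)"
    by (elim nn_integral_mono_AE[OF eventually_mono])
       (simp add: C ennreal_mult mult_left_mono nonneg)
  also have "\<dots> = ennreal C * (\<integral>\<^sup>+\<omega>. W \<omega> \<partial>distr M (stream_space exponential1) (jump_increments T))"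
    using measurable_comp[OF incr_meas W_meas] W_meas
    by (simp add: nn_integral_cmult nn_integral_distr[OF incr_meas] o_def)
  also have "\<dots> = ennreal C * (SUP n. \<integral>\<^sup>+\<omega>. pdp_value \<phi> Fl J t n 0 p0 \<omega> \<partial>stream_space exponential1)"
    unfolding distr_jump_increments[OF assms(1,2)] W_def
    by (subst nn_integral_monotone_convergence_SUP)
       (auto intro!: incseq_SucI le_funI pdp_value_mono measurable_pdp_value_stream)
  also have "\<dots> \<le> ennreal C * ennreal (\<phi> 0 p0)"
    by (intro mult_left_mono SUP_least nn_integral_pdp_value_le nonneg step) (use t in auto)
  finally show ?thesis by (simp add: C nonneg ennreal_mult)
qed

end

text \<open>With \<open>h\<close> the Lyapunov value along the flow and \<open>g\<close> its value right after a jump,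
  \<open>h' - h + g\<close> is the generator of the process applied to the Lyapunov function; the
  factor \<open>exp (-v)\<close> below is the probability that no jump occurs before time \<open>v\<close>.\<close>
lemma nn_integral_exponential1_clock_le:
  fixes h h' g :: "real \<Rightarrow> real"
  assumes T: "0 \<le> T" and h: "continuous_on {0..T} h" and g: "continuous_on {0..T} g"
    and g_nonneg: "\<And>v. v \<in> {0..T} \<Longrightarrow> 0 \<le> g v" and hT: "0 \<le> h T"
    and h': "\<And>v. 0 < v \<Longrightarrow> v < T \<Longrightarrow> (h has_real_derivative h' v) (at v)"
    and generator: "\<And>v. 0 < v \<Longrightarrow> v < T \<Longrightarrow> h' v + g v \<le> h v"
  shows "(\<integral>\<^sup>+e. (if T < e then ennreal (h T) else ennreal (g e)) \<partial>exponential1) \<le> ennreal (h 0)"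
proof -
  define G where "G v = exp (-v) * g v" for v
  define K where "K v = exp (-v) * h v + integral {0..v} G" for v
  have G: "continuous_on {0..T} G"
    unfolding G_def by (intro continuous_intros g)
  have "K T \<le> K 0"
  proof (rule DERIV_nonpos_imp_decreasing_open[OF T])
    fix v assume v: "0 < v" "v < T"
    have "((\<lambda>x. integral {0..x} G) has_real_derivative G v) (at v within {0..T})"
      by (rule integral_has_real_derivative[OF G]) (use v in auto)
    moreover have "at v within {0..T} = at v"
      by (rule at_within_interior) (use v in auto)
    ultimately have "(K has_real_derivative exp (-v) * (h' v - h v + g v)) (at v)"
      unfolding K_def G_def
      by (auto intro!: derivative_eq_intros h' v simp: algebra_simps)
    moreover have "exp (-v) * (h' v - h v + g v) \<le> 0"
      using generator[OF v] by (simp add: mult_nonneg_nonpos)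
    ultimately show "\<exists>y. (K has_real_derivative y) (at v) \<and> y \<le> 0" by blast
  next
    show "continuous_on {0..T} K"
      unfolding K_def
      by (intro continuous_intros h indefinite_integral_continuous_1 integrable_continuous_interval G)
  qed
  then have "h T * exp (-T) + integral {0..T} G \<le> h 0"
    by (simp add: K_def mult.commute)
  moreover have "(\<integral>\<^sup>+e. (if T < e then ennreal (h T) else ennreal (g e)) \<partial>exponential1)
      = ennreal (h T * exp (-T) + integral {0..T} G)"
    unfolding G_def by (rule nn_integral_exponential1_clock[OF hT T g_nonneg g])
  ultimately show ?thesis by (simp add: ennreal_leI)
qed

lemma supermartingale_stepI:
  fixes \<phi> :: "real \<Rightarrow> 'b \<Rightarrow> real" and D :: "real \<Rightarrow> 'b \<Rightarrow> real \<Rightarrow> real"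
  assumes nonneg: "\<And>u p. 0 \<le> \<phi> u p"
    and start: "\<And>s p. 0 \<le> s \<Longrightarrow> s \<le> t \<Longrightarrow> \<phi> s (Fl s s p) = \<phi> s p"
    and flow_cont: "\<And>s p. 0 \<le> s \<Longrightarrow> s \<le> t \<Longrightarrow> continuous_on {s..t} (\<lambda>u. \<phi> u (Fl s u p))"
    and jump_cont: "\<And>s p. 0 \<le> s \<Longrightarrow> s \<le> t \<Longrightarrow> continuous_on {s..t} (\<lambda>u. \<phi> u (J u (Fl s u p)))"
    and deriv: "\<And>s p u. 0 \<le> s \<Longrightarrow> s < u \<Longrightarrow> u < t \<Longrightarrow>
      ((\<lambda>u. \<phi> u (Fl s u p)) has_real_derivative D s p u) (at u)"
    and generator: "\<And>s p u. 0 \<le> s \<Longrightarrow> s < u \<Longrightarrow> u < t \<Longrightarrow>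
      D s p u + \<phi> u (J u (Fl s u p)) \<le> \<phi> u (Fl s u p)"
  shows "supermartingale_step \<phi> Fl J t"
  unfolding supermartingale_step_def
proof (intro allI impI)
  fix s p assume s: "0 \<le> s" "s \<le> t"
  have shift: "continuous_on {0..t - s} (\<lambda>v. g (s + v))" if "continuous_on {s..t} g" for g :: "real \<Rightarrow> real"
    by (rule continuous_on_compose2[OF that]) (auto intro!: continuous_intros)
  have "(\<integral>\<^sup>+e. (if t - s < e then ennreal (\<phi> (s + (t - s)) (Fl s (s + (t - s)) p))
            else ennreal (\<phi> (s + e) (J (s + e) (Fl s (s + e) p)))) \<partial>exponential1)
      \<le> ennreal (\<phi> (s + 0) (Fl s (s + 0) p))"
  proof (rule nn_integral_exponential1_clock_le[where h'="\<lambda>v. D s p (s + v)"])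
    fix v assume v: "0 < v" "v < t - s"
    show "((\<lambda>v. \<phi> (s + v) (Fl s (s + v) p)) has_real_derivative D s p (s + v)) (at v)"
    proof -
      have "((\<lambda>u. \<phi> u (Fl s u p)) has_real_derivative D s p (v + s)) (at (v + s))"
        using deriv[OF s(1), of "v + s" p] v by simp
      then have "((\<lambda>v. \<phi> (v + s) (Fl s (v + s) p)) has_real_derivative D s p (v + s)) (at v)"
        by (simp only: DERIV_shift)
      then show ?thesis by (simp add: add.commute)
    qed
  qed (use s in \<open>auto intro!: shift flow_cont jump_cont generator nonneg\<close>)
  then show "(\<integral>\<^sup>+e. (if t < s + e then ennreal (\<phi> t (Fl s t p))
            else ennreal (\<phi> (s + e) (J (s + e) (Fl s (s + e) p)))) \<partial>exponential1) \<le> ennreal (\<phi> s p)"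
    using start[OF s] by (simp add: diff_less_eq add.commute cong: if_cong)
qed

section \<open>Smooth convex functions\<close>

lemma norm_diff_scaleR_square:
  fixes w g :: "'a::real_inner"
  shows "(norm (w - a *\<^sub>R g))\<^sup>2 = (norm w)\<^sup>2 - 2 * a * (g \<bullet> w) + a\<^sup>2 * (norm g)\<^sup>2"
  unfolding power2_norm_eq_inner
  by (simp add: inner_diff_left inner_diff_right inner_commute power2_eq_square algebra_simps)

lemma convex_on_gradient_inequality:
  fixes f :: "'a::real_inner \<Rightarrow> real"
  assumes convex: "convex_on UNIV f" and deriv: "(f has_derivative (\<lambda>h. df \<bullet> h)) (at x)"
  shows "f x + df \<bullet> (y - x) \<le> f y"
proof -
  define \<phi> where "\<phi> s = f (x + s *\<^sub>R (y - x))" for s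
  have "((\<lambda>s. x + s *\<^sub>R (y - x)) has_derivative (\<lambda>s. s *\<^sub>R (y - x))) (at 0)"
    by (auto intro!: derivative_eq_intros)
  from has_derivative_compose[OF this, of f "\<lambda>h. df \<bullet> h"]
  have "(\<phi> has_derivative (\<lambda>s. s * (df \<bullet> (y - x)))) (at 0)"
    using deriv by (simp add: \<phi>_def[abs_def])
  then have "(\<phi> has_field_derivative (df \<bullet> (y - x))) (at 0)"
    unfolding has_field_derivative_def by (rule has_derivative_eq_rhs) (simp add: fun_eq_iff)
  then have "((\<lambda>s. (\<phi> s - \<phi> 0) / (s - 0)) \<longlongrightarrow> df \<bullet> (y - x)) (at_right 0)"
    using has_field_derivative_iff has_field_derivative_at_within by blast
  moreover have "\<forall>\<^sub>F s in at_right 0. (\<phi> s - \<phi> 0) / (s - 0) \<le> f y - f x"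
  proof (rule eventually_at_rightI[of 0 1])
    fix s :: real assume s: "s \<in> {0<..<1}"
    have "x + s *\<^sub>R (y - x) = (1 - s) *\<^sub>R x + s *\<^sub>R y" by (simp add: algebra_simps)
    then have "\<phi> s \<le> (1 - s) * f x + s * f y"
      unfolding \<phi>_def using convex_onD[OF convex, of s x y] s by simp
    then have "\<phi> s - \<phi> 0 \<le> s * (f y - f x)" by (simp add: \<phi>_def algebra_simps)
    then show "(\<phi> s - \<phi> 0) / (s - 0) \<le> f y - f x"
      using s by (simp add: divide_le_eq mult.commute)
  qed simp
  ultimately have "df \<bullet> (y - x) \<le> f y - f x"
    by (rule tendsto_upperbound) simp
  then show ?thesis by simp
qed

lemma L_smooth_gradient_step:
  assumes "L > 0" and "L_smooth L f df"
  shows "f (y - (1 / L) *\<^sub>R df y) \<le> f y - (norm (df y))\<^sup>2 / (2 * L)"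
proof -
  have "f (y - (1 / L) *\<^sub>R df y)
      \<le> f y + df y \<bullet> ((y - (1 / L) *\<^sub>R df y) - y) + L / 2 * (norm ((y - (1 / L) *\<^sub>R df y) - y))\<^sup>2"
    using assms(2) unfolding L_smooth_def by blast
  also have "\<dots> = f y - (norm (df y))\<^sup>2 / L + L / 2 * ((norm (df y))\<^sup>2 / L\<^sup>2)"
    using assms(1) by (simp add: power2_norm_eq_inner power_divide)
  also have "\<dots> = f y - (norm (df y))\<^sup>2 / (2 * L)"
    using assms(1) by (simp add: field_simps power2_eq_square)
  finally show ?thesis .
qed

text \<open>Apply the gradient inequality at \<open>x\<close> to the point \<open>y - (df y - df x) / L\<close> and the
  smoothness bound at \<open>y\<close> to the same point.\<close>
lemma L_smooth_cocoercive:
  fixes f :: "'a::euclidean_space \<Rightarrow> real"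
  assumes convex: "convex_on UNIV f" and deriv: "\<And>x. (f has_derivative (\<lambda>h. df x \<bullet> h)) (at x)"
    and L: "L > 0" and smooth: "L_smooth L f df"
  shows "f x + df x \<bullet> (y - x) + (norm (df y - df x))\<^sup>2 / (2 * L) \<le> f y"
proof -
  define g where "g = df y - df x"
  define y' where "y' = y - (1 / L) *\<^sub>R g"
  have "f x + df x \<bullet> (y' - x) \<le> f y'"
    by (rule convex_on_gradient_inequality[OF convex deriv])
  also have "f y' \<le> f y + df y \<bullet> (y' - y) + L / 2 * (norm (y' - y))\<^sup>2"
    using smooth unfolding L_smooth_def by blast
  finally have "f x + df x \<bullet> (y' - x) \<le> f y + df y \<bullet> (y' - y) + L / 2 * (norm (y' - y))\<^sup>2" .
  moreover have "df x \<bullet> (y' - x) = df x \<bullet> (y - x) - (df x \<bullet> g) / L"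
    by (simp add: y'_def inner_diff_right)
  moreover have "df y \<bullet> (y' - y) = - (df y \<bullet> g) / L"
    by (simp add: y'_def)
  moreover have "L / 2 * (norm (y' - y))\<^sup>2 = (norm g)\<^sup>2 / (2 * L)"
    using L by (simp add: y'_def power_divide power2_eq_square field_simps)
  moreover have "(norm g)\<^sup>2 = df y \<bullet> g - df x \<bullet> g"
    by (simp add: g_def power2_norm_eq_inner inner_diff_left)
  moreover have "(norm g)\<^sup>2 / L = 2 * ((norm g)\<^sup>2 / (2 * L))"
    using L by simp
  ultimately show ?thesis
    unfolding g_def[symmetric] by (simp add: diff_divide_distrib)
qed

lemma L_smooth_lipschitz_gradient:
  fixes f :: "'a::euclidean_space \<Rightarrow> real"
  assumes convex: "convex_on UNIV f" and deriv: "\<And>x. (f has_derivative (\<lambda>h. df x \<bullet> h)) (at x)"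
    and L: "L > 0" and smooth: "L_smooth L f df"
  shows "L-lipschitz_on UNIV df"
proof (rule lipschitz_onI)
  fix x y :: 'a
  define g where "g = df y - df x"
  have "(norm g)\<^sup>2 / L \<le> g \<bullet> (y - x)"
    using L_smooth_cocoercive[OF assms, of x y] L_smooth_cocoercive[OF assms, of y x]
    by (simp add: g_def norm_minus_commute field_simps inner_diff_left inner_diff_right inner_commute)
  also have "\<dots> \<le> norm g * norm (y - x)" by (rule norm_cauchy_schwarz)
  finally have "norm g * norm g \<le> norm g * (L * norm (y - x))"
    using L by (simp add: divide_le_eq power2_eq_square algebra_simps)
  then have "norm g \<le> L * norm (y - x)"
    using L by (cases "norm g = 0") (auto simp: mult_le_cancel_left)
  then show "dist (df x) (df y) \<le> L * dist x y"
    by (simp add: g_def dist_norm norm_minus_commute)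
qed (use L in simp)

lemma has_vector_derivative_zero_interval_eq:
  fixes g :: "real \<Rightarrow> 'a::banach"
  assumes "a \<le> b" and "continuous_on {a..b} g"
    and "\<And>v. a < v \<Longrightarrow> v < b \<Longrightarrow> (g has_vector_derivative 0) (at v)"
  shows "g b = g a"
proof (rule has_derivative_zero_unique_strong_interval[of "{a, b}" a b g "g a" b])
  fix v assume "v \<in> {a..b} - {a, b}"
  then have "(g has_vector_derivative 0) (at v within {a..b})"
    using assms(3)[of v] by (auto intro: has_vector_derivative_at_within)
  then show "(g has_derivative (\<lambda>h. 0)) (at v within {a..b})"
    by (simp add: has_vector_derivative_def)
qed (use assms in auto)

lemma has_real_derivative_comp_gradient:
  assumes "(f has_derivative (\<lambda>h. df \<bullet> h)) (at (X v))" and "(X has_vector_derivative X') (at v)"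
  shows "((\<lambda>v. f (X v)) has_real_derivative (df \<bullet> X')) (at v)"
proof -
  have "((\<lambda>v. f (X v)) has_derivative (\<lambda>h. df \<bullet> (h *\<^sub>R X'))) (at v)"
    using has_derivative_compose[OF assms(2)[unfolded has_vector_derivative_def] assms(1)] .
  then show ?thesis
    unfolding has_field_derivative_def by (rule has_derivative_eq_rhs) (simp add: fun_eq_iff)
qed

lemma has_real_derivative_norm_diff_square:
  assumes "(Z has_vector_derivative Z') (at v)"
  shows "((\<lambda>v. (norm (Z v - c))\<^sup>2) has_real_derivative 2 * ((Z v - c) \<bullet> Z')) (at v)"
proof -
  have "((\<lambda>v. (Z v - c) \<bullet> (Z v - c)) has_derivative
      (\<lambda>h. (Z v - c) \<bullet> (h *\<^sub>R Z') + (h *\<^sub>R Z') \<bullet> (Z v - c))) (at v)"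
    using assms unfolding has_vector_derivative_def by (auto intro!: derivative_eq_intros)
  then show ?thesis
    unfolding has_field_derivative_def power2_norm_eq_inner
    by (rule has_derivative_eq_rhs) (simp add: fun_eq_iff inner_commute algebra_simps)
qed

lemma
  assumes "continuized_path \<eta> \<eta>' \<gamma> \<gamma>' df x0 z0 \<tau> x z"
  shows continuized_path_continuous_on:
      "continuous_on {\<tau> k..<\<tau> (Suc k)} x" "continuous_on {\<tau> k..<\<tau> (Suc k)} z"
    and continuized_path_has_vector_derivative: "\<tau> k < t \<Longrightarrow> t < \<tau> (Suc k) \<Longrightarrow>
      (x has_vector_derivative \<eta> t *\<^sub>R (z t - x t)) (at t)"
      "\<tau> k < t \<Longrightarrow> t < \<tau> (Suc k) \<Longrightarrow> (z has_vector_derivative \<eta>' t *\<^sub>R (x t - z t)) (at t)"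
  using assms by (auto simp: continuized_path_def)

lemma continuized_path_jump:
  assumes valid: "valid_jump_times \<tau>"
    and path: "continuized_path \<eta> \<eta>' \<gamma> \<gamma>' df x0 z0 \<tau> x z"
    and flow: "\<And>u. \<tau> k < u \<Longrightarrow> u < \<tau> (Suc k) \<Longrightarrow> (x u, z u) = F u"
    and cont: "isCont F (\<tau> (Suc k))"
  shows "(x (\<tau> (Suc k)), z (\<tau> (Suc k))) =
    (fst (F (\<tau> (Suc k))) - \<gamma> (\<tau> (Suc k)) *\<^sub>R df (fst (F (\<tau> (Suc k)))),
     snd (F (\<tau> (Suc k))) - \<gamma>' (\<tau> (Suc k)) *\<^sub>R df (fst (F (\<tau> (Suc k)))))"
proof -
  let ?t = "\<tau> (Suc k)"
  obtain xl zl where xl: "(x \<longlongrightarrow> xl) (at_left ?t)" and zl: "(z \<longlongrightarrow> zl) (at_left ?t)"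
    and jump: "x ?t = xl - \<gamma> ?t *\<^sub>R df xl" "z ?t = zl - \<gamma>' ?t *\<^sub>R df xl"
    using path unfolding continuized_path_def by (metis Suc_eq_plus1 le_add2)
  have "\<forall>\<^sub>F u in at_left ?t. F u = (x u, z u)"
    using eventually_at_left_real[OF valid_jump_times_less_Suc[OF valid]] by eventually_elim (simp add: flow)
  moreover have "(F \<longlongrightarrow> F ?t) (at_left ?t)"
    using cont by (simp add: isCont_def filterlim_at_split)
  ultimately have "((\<lambda>u. (x u, z u)) \<longlongrightarrow> F ?t) (at_left ?t)"
    by (rule Lim_transform_eventually[rotated])
  moreover have "((\<lambda>u. (x u, z u)) \<longlongrightarrow> (xl, zl)) (at_left ?t)"
    by (rule tendsto_Pair[OF xl zl])
  ultimately have "F ?t = (xl, zl)"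
    by (rule tendsto_unique[OF trivial_limit_at_left_real])
  with jump show ?thesis by simp
qed

section \<open>The convex case\<close>

text \<open>The flow of \<open>x' = (2 / u) (z - x), z' = 0\<close> from time \<open>s\<close> to time \<open>u\<close>: the quantity
  \<open>u\<^sup>2 (x - z)\<close> is conserved. For \<open>s = 0\<close> (with \<open>0 / 0 = 0\<close>) it returns \<open>x = z\<close> even at
  \<open>u = 0\<close>, which is why the flow is only used at positive times.\<close>
definition flow_cvx :: "real \<Rightarrow> real \<Rightarrow> 'a::real_vector \<times> 'a \<Rightarrow> 'a \<times> 'a" where
  "flow_cvx s u p = (snd p + (s / u)\<^sup>2 *\<^sub>R (fst p - snd p), snd p)"

definition jump_cvx :: "('a::real_vector \<Rightarrow> 'a) \<Rightarrow> real \<Rightarrow> real \<Rightarrow> 'a \<times> 'a \<Rightarrow> 'a \<times> 'a" where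
  "jump_cvx df L u p = (fst p - (1 / L) *\<^sub>R df (fst p), snd p - (u / (2 * L)) *\<^sub>R df (fst p))"

definition lyapunov_cvx :: "('a::real_normed_vector \<Rightarrow> real) \<Rightarrow> real \<Rightarrow> 'a \<Rightarrow> real \<Rightarrow> 'a \<times> 'a \<Rightarrow> real" where
  "lyapunov_cvx f L xs u p = u\<^sup>2 * (f (fst p) - f xs) + 2 * L * (norm (snd p - xs))\<^sup>2"

lemma flow_cvx_has_vector_derivative:
  assumes "0 < u"
  shows "((\<lambda>u. fst (flow_cvx s u p)) has_vector_derivative
      (2 / u) *\<^sub>R (snd (flow_cvx s u p) - fst (flow_cvx s u p))) (at u)"
proof -
  have "((\<lambda>u. (s / u)\<^sup>2) has_real_derivative - 2 * s\<^sup>2 / u ^ 3) (at u)"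
    using assms by (auto intro!: derivative_eq_intros simp: power2_eq_square power3_eq_cube field_simps)
  from has_vector_derivative_scaleR[OF this has_vector_derivative_const[of "fst p - snd p"]]
  have "((\<lambda>u. (s / u)\<^sup>2 *\<^sub>R (fst p - snd p)) has_vector_derivative
      (- 2 * s\<^sup>2 / u ^ 3) *\<^sub>R (fst p - snd p)) (at u)"
    by simp
  then have "((\<lambda>u. snd p + (s / u)\<^sup>2 *\<^sub>R (fst p - snd p)) has_vector_derivative
      (- 2 * s\<^sup>2 / u ^ 3) *\<^sub>R (fst p - snd p)) (at u)"
    using has_vector_derivative_add[OF has_vector_derivative_const] by fastforce
  moreover have "(2 / u) *\<^sub>R (snd (flow_cvx s u p) - fst (flow_cvx s u p))
      = (- 2 * s\<^sup>2 / u ^ 3) *\<^sub>R (fst p - snd p)"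
    using assms by (simp add: flow_cvx_def power2_eq_square power3_eq_cube field_simps)
  ultimately show ?thesis
    by (simp only: flow_cvx_def fst_conv snd_conv)
qed

lemma continuized_path_cvx_flow:
  assumes valid: "valid_jump_times \<tau>"
    and path: "continuized_path (\<lambda>t. 2 / t) (\<lambda>t. 0) \<gamma> \<gamma>' df x0 z0 \<tau> x z"
    and u: "\<tau> k \<le> u" "u < \<tau> (Suc k)" "0 < u"
  shows "(x u, z u) = flow_cvx (\<tau> k) u (x (\<tau> k), z (\<tau> k))"
proof (cases "u = \<tau> k")
  case True
  then show ?thesis using u by (simp add: flow_cvx_def)
next
  case False
  have "{\<tau> k..v} \<subseteq> {\<tau> k..<\<tau> (Suc k)}" if "v \<le> u" for v
    using that u by auto
  then have cont: "continuous_on {\<tau> k..v} x" "continuous_on {\<tau> k..v} z" if "v \<le> u" for v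
    using continuized_path_continuous_on[OF path] that by (meson continuous_on_subset)+
  have dx: "(x has_vector_derivative (2 / w) *\<^sub>R (z w - x w)) (at w)"
    and dz: "(z has_vector_derivative 0) (at w)" if "\<tau> k < w" "w < u" for w
    using continuized_path_has_vector_derivative[OF path, of k w] that u by auto
  have z_const: "z v = z (\<tau> k)" if "\<tau> k \<le> v" "v \<le> u" for v
    using that by (intro has_vector_derivative_zero_interval_eq cont dz) auto
  define g where "g v = v\<^sup>2 *\<^sub>R (x v - z (\<tau> k))" for v
  have "g u = g (\<tau> k)"
  proof (rule has_vector_derivative_zero_interval_eq[OF u(1)])
    show "continuous_on {\<tau> k..u} g"
      unfolding g_def by (intro continuous_intros cont) simp
    fix w assume w: "\<tau> k < w" "w < u"
    have "w > 0" using w valid_jump_times_nonneg[OF valid, of k] by linarith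
    have "(g has_vector_derivative (w\<^sup>2 *\<^sub>R ((2 / w) *\<^sub>R (z w - x w)) + (2 * w) *\<^sub>R (x w - z (\<tau> k)))) (at w)"
      unfolding g_def by (auto intro!: derivative_eq_intros dx w)
    also have "w\<^sup>2 *\<^sub>R ((2 / w) *\<^sub>R (z w - x w)) + (2 * w) *\<^sub>R (x w - z (\<tau> k)) = 0"
      using z_const[of w] w \<open>w > 0\<close> by (simp add: power2_eq_square algebra_simps)
    finally show "(g has_vector_derivative 0) (at w)" .
  qed
  then have conserved: "u\<^sup>2 *\<^sub>R (x u - z (\<tau> k)) = (\<tau> k)\<^sup>2 *\<^sub>R (x (\<tau> k) - z (\<tau> k))"
    by (simp add: g_def)
  have "x u - z (\<tau> k) = inverse (u\<^sup>2) *\<^sub>R (u\<^sup>2 *\<^sub>R (x u - z (\<tau> k)))"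
    using u by simp
  also have "\<dots> = (\<tau> k / u)\<^sup>2 *\<^sub>R (x (\<tau> k) - z (\<tau> k))"
    unfolding conserved by (simp add: power_divide field_simps)
  finally show ?thesis
    using z_const[of u] u by (simp add: flow_cvx_def algebra_simps)
qed

lemma continuized_path_cvx_jump:
  assumes valid: "valid_jump_times \<tau>"
    and path: "continuized_path (\<lambda>t. 2 / t) (\<lambda>t. 0) (\<lambda>t. 1 / L) (\<lambda>t. t / (2 * L)) df x0 z0 \<tau> x z"
  shows "(x (\<tau> (Suc k)), z (\<tau> (Suc k)))
    = jump_cvx df L (\<tau> (Suc k)) (flow_cvx (\<tau> k) (\<tau> (Suc k)) (x (\<tau> k), z (\<tau> k)))"
proof -
  have pos: "0 < \<tau> (Suc k)"
    using valid_jump_times_nonneg[OF valid, of k] valid_jump_times_less_Suc[OF valid, of k] by linarith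
  have "(x (\<tau> (Suc k)), z (\<tau> (Suc k))) = (let p = flow_cvx (\<tau> k) (\<tau> (Suc k)) (x (\<tau> k), z (\<tau> k)) in
      (fst p - (1 / L) *\<^sub>R df (fst p), snd p - (\<tau> (Suc k) / (2 * L)) *\<^sub>R df (fst p)))"
    unfolding Let_def
  proof (rule continuized_path_jump[OF valid path])
    fix u assume "\<tau> k < u" "u < \<tau> (Suc k)"
    then show "(x u, z u) = flow_cvx (\<tau> k) u (x (\<tau> k), z (\<tau> k))"
      using valid_jump_times_nonneg[OF valid, of k]
      by (intro continuized_path_cvx_flow[OF valid path]) auto
  next
    show "isCont (\<lambda>u. flow_cvx (\<tau> k) u (x (\<tau> k), z (\<tau> k))) (\<tau> (Suc k))"
      unfolding flow_cvx_def using pos by (auto intro!: continuous_intros)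
  qed
  then show ?thesis by (simp add: jump_cvx_def Let_def)
qed

lemma continuized_path_cvx_pdp_path_at:
  assumes valid: "valid_jump_times \<tau>"
    and path: "continuized_path (\<lambda>t. 2 / t) (\<lambda>t. 0) (\<lambda>t. 1 / L) (\<lambda>t. t / (2 * L)) df x0 z0 \<tau> x z"
    and t: "0 < t"
  shows "pdp_path_at flow_cvx (jump_cvx df L) (x0, z0) \<tau> (\<lambda>u. (x u, z u)) t"
  using path continuized_path_cvx_jump[OF valid path] continuized_path_cvx_flow[OF valid path _ _ t]
  by (simp add: pdp_path_at_def continuized_path_def)

lemma lyapunov_cvx_flow_has_real_derivative:
  assumes deriv: "(f has_derivative (\<lambda>h. df \<bullet> h)) (at y)" and u: "0 < u"
    and flow: "flow_cvx s u p = (y, z)"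
  shows "((\<lambda>u. lyapunov_cvx f L xs u (flow_cvx s u p)) has_real_derivative
    2 * u * (f y - f xs) + 2 * u * (df \<bullet> (z - y))) (at u)"
proof -
  define F where "F u = f (fst (flow_cvx s u p))" for u
  have "(F has_real_derivative df \<bullet> ((2 / u) *\<^sub>R (z - y))) (at u)"
    using has_real_derivative_comp_gradient[of f df "\<lambda>u. fst (flow_cvx s u p)", OF _
        flow_cvx_has_vector_derivative[OF u]] deriv flow
    unfolding F_def by simp
  moreover have "F u = f y" using flow by (simp add: F_def)
  ultimately have "((\<lambda>u. u\<^sup>2 * (F u - f xs) + 2 * L * (norm (snd p - xs))\<^sup>2) has_real_derivative
      2 * u * (f y - f xs) + 2 * u * (df \<bullet> (z - y))) (at u)"
    using u by (auto intro!: derivative_eq_intros simp: power2_eq_square)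
  then show ?thesis
    by (simp add: lyapunov_cvx_def F_def flow_cvx_def)
qed

lemma lyapunov_cvx_generator_le:
  fixes f :: "'a::euclidean_space \<Rightarrow> real"
  assumes convex: "convex_on UNIV f" and deriv: "(f has_derivative (\<lambda>h. df y \<bullet> h)) (at y)"
    and L: "L > 0" and smooth: "L_smooth L f df" and u: "0 \<le> u"
  shows "2 * u * (f y - f xs) + 2 * u * (df y \<bullet> (z - y)) + lyapunov_cvx f L xs u (jump_cvx df L u (y, z))
    \<le> lyapunov_cvx f L xs u (y, z)"
proof -
  define g where "g = df y"
  define w where "w = z - xs"
  have descent: "f (y - (1 / L) *\<^sub>R g) \<le> f y - (norm g)\<^sup>2 / (2 * L)"
    unfolding g_def by (rule L_smooth_gradient_step[OF L smooth])
  have gradient: "f y + g \<bullet> (xs - y) \<le> f xs"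
    unfolding g_def by (rule convex_on_gradient_inequality[OF convex deriv])
  have "2 * L * (norm (z - (u / (2 * L)) *\<^sub>R g - xs))\<^sup>2
      = 2 * L * (norm w)\<^sup>2 - 2 * u * (g \<bullet> w) + u\<^sup>2 * ((norm g)\<^sup>2 / (2 * L))"
    using norm_diff_scaleR_square[of w "u / (2 * L)" g] L
    by (simp add: w_def algebra_simps power2_eq_square field_simps)
  moreover have "g \<bullet> (z - y) = g \<bullet> w + g \<bullet> (xs - y)"
    by (simp add: w_def inner_diff_right)
  ultimately have "2 * u * (f y - f xs) + 2 * u * (df y \<bullet> (z - y))
      + lyapunov_cvx f L xs u (jump_cvx df L u (y, z)) - lyapunov_cvx f L xs u (y, z)
    = u\<^sup>2 * (f (y - (1 / L) *\<^sub>R g) - f y + (norm g)\<^sup>2 / (2 * L)) + 2 * u * (f y + g \<bullet> (xs - y) - f xs)"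
    by (simp add: lyapunov_cvx_def jump_cvx_def g_def[symmetric] w_def[symmetric] algebra_simps)
  also have "\<dots> \<le> 0"
    using descent gradient u
    by (intro add_nonpos_nonpos) (simp_all add: mult_nonneg_nonpos)
  finally show ?thesis by simp
qed

section \<open>The strongly convex case\<close>

text \<open>The flow of \<open>x' = a (z - x), z' = a (x - z)\<close> from time \<open>s\<close> to time \<open>u\<close>: the sum \<open>x + z\<close>
  and \<open>exp (2 a u) (x - z)\<close> are conserved.\<close>
definition flow_scvx :: "real \<Rightarrow> real \<Rightarrow> real \<Rightarrow> 'a::real_vector \<times> 'a \<Rightarrow> 'a \<times> 'a" where
  "flow_scvx a s u p =
    ((1/2) *\<^sub>R (fst p + snd p) + (exp (-2 * a * (u - s)) / 2) *\<^sub>R (fst p - snd p),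
     (1/2) *\<^sub>R (fst p + snd p) - (exp (-2 * a * (u - s)) / 2) *\<^sub>R (fst p - snd p))"

definition jump_scvx :: "('a::real_vector \<Rightarrow> 'a) \<Rightarrow> real \<Rightarrow> real \<Rightarrow> 'a \<times> 'a \<Rightarrow> 'a \<times> 'a" where
  "jump_scvx df L c p = (fst p - (1 / L) *\<^sub>R df (fst p), snd p - c *\<^sub>R df (fst p))"

definition scvx_energy :: "('a::real_normed_vector \<Rightarrow> real) \<Rightarrow> real \<Rightarrow> 'a \<Rightarrow> 'a \<times> 'a \<Rightarrow> real" where
  "scvx_energy f \<mu> xs p = f (fst p) - f xs + \<mu> / 2 * (norm (snd p - xs))\<^sup>2"

definition lyapunov_scvx :: "('a::real_normed_vector \<Rightarrow> real) \<Rightarrow> real \<Rightarrow> real \<Rightarrow> 'a \<Rightarrow> real \<Rightarrow> 'a \<times> 'a \<Rightarrow> real"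
  where "lyapunov_scvx f \<mu> a xs u p = exp (a * u) * scvx_energy f \<mu> xs p"

lemma flow_scvx_same_time [simp]: "flow_scvx a s s p = p"
proof -
  have "(1/2) *\<^sub>R (x + z) + (1/2) *\<^sub>R (x - z) = x" "(1/2) *\<^sub>R (x + z) - (1/2) *\<^sub>R (x - z) = z"
    for x z :: 'a
    by (simp_all add: algebra_simps flip: scaleR_add_left)
  then show ?thesis by (simp add: flow_scvx_def)
qed

lemma flow_scvx_has_vector_derivative:
  shows "((\<lambda>u. fst (flow_scvx a s u p)) has_vector_derivative
      a *\<^sub>R (snd (flow_scvx a s u p) - fst (flow_scvx a s u p))) (at u)"
    and "((\<lambda>u. snd (flow_scvx a s u p)) has_vector_derivative
      a *\<^sub>R (fst (flow_scvx a s u p) - snd (flow_scvx a s u p))) (at u)"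
proof -
  define m where "m = (1/2) *\<^sub>R (fst p + snd p)"
  define d where "d = fst p - snd p"
  define E where "E u = exp (-2 * a * (u - s)) / 2" for u
  have flow: "flow_scvx a s u p = (m + E u *\<^sub>R d, m - E u *\<^sub>R d)" for u
    by (simp add: flow_scvx_def m_def d_def E_def)
  have "(E has_real_derivative -2 * a * E u) (at u)"
    unfolding E_def by (auto intro!: derivative_eq_intros)
  from has_vector_derivative_scaleR[OF this has_vector_derivative_const[of d]]
  have dE: "((\<lambda>u. E u *\<^sub>R d) has_vector_derivative (-2 * a * E u) *\<^sub>R d) (at u)"
    by simp
  have "((\<lambda>u. m + E u *\<^sub>R d) has_vector_derivative (-2 * a * E u) *\<^sub>R d) (at u)"
    using has_vector_derivative_add[OF has_vector_derivative_const dE] by simp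
  moreover have "((\<lambda>u. m - E u *\<^sub>R d) has_vector_derivative (2 * a * E u) *\<^sub>R d) (at u)"
    using has_vector_derivative_diff[OF has_vector_derivative_const dE] by simp
  ultimately show "((\<lambda>u. fst (flow_scvx a s u p)) has_vector_derivative
      a *\<^sub>R (snd (flow_scvx a s u p) - fst (flow_scvx a s u p))) (at u)"
    and "((\<lambda>u. snd (flow_scvx a s u p)) has_vector_derivative
      a *\<^sub>R (fst (flow_scvx a s u p) - snd (flow_scvx a s u p))) (at u)"
    unfolding flow by (simp_all add: algebra_simps flip: scaleR_add_left)
qed

lemma continuized_path_scvx_flow:
  assumes path: "continuized_path (\<lambda>t. a) (\<lambda>t. a) \<gamma> \<gamma>' df x0 z0 \<tau> x z"
    and u: "\<tau> k \<le> u" "u < \<tau> (Suc k)"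
  shows "(x u, z u) = flow_scvx a (\<tau> k) u (x (\<tau> k), z (\<tau> k))"
proof -
  have "{\<tau> k..u} \<subseteq> {\<tau> k..<\<tau> (Suc k)}"
    using u by auto
  then have cont: "continuous_on {\<tau> k..u} x" "continuous_on {\<tau> k..u} z"
    using continuized_path_continuous_on[OF path] by (meson continuous_on_subset)+
  have dx: "(x has_vector_derivative a *\<^sub>R (z w - x w)) (at w)"
    and dz: "(z has_vector_derivative a *\<^sub>R (x w - z w)) (at w)" if "\<tau> k < w" "w < u" for w
    using continuized_path_has_vector_derivative[OF path, of k w] that u by auto
  have sum: "x u + z u = x (\<tau> k) + z (\<tau> k)"
  proof (rule has_vector_derivative_zero_interval_eq[OF u(1), of "\<lambda>v. x v + z v"])
    show "continuous_on {\<tau> k..u} (\<lambda>v. x v + z v)"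
      by (intro continuous_intros cont)
    fix w assume "\<tau> k < w" "w < u"
    from has_vector_derivative_add[OF dx dz, OF this this]
    show "((\<lambda>v. x v + z v) has_vector_derivative 0) (at w)"
      by (simp add: algebra_simps)
  qed
  have "exp (2 * a * u) *\<^sub>R (x u - z u) = exp (2 * a * \<tau> k) *\<^sub>R (x (\<tau> k) - z (\<tau> k))"
  proof (rule has_vector_derivative_zero_interval_eq[OF u(1), of "\<lambda>v. exp (2 * a * v) *\<^sub>R (x v - z v)"])
    show "continuous_on {\<tau> k..u} (\<lambda>v. exp (2 * a * v) *\<^sub>R (x v - z v))"
      by (intro continuous_intros cont)
    fix w assume w: "\<tau> k < w" "w < u"
    have "((\<lambda>v. exp (2 * a * v) *\<^sub>R (x v - z v)) has_vector_derivative
        exp (2 * a * w) *\<^sub>R (a *\<^sub>R (z w - x w) - a *\<^sub>R (x w - z w)) + (exp (2 * a * w) * (2 * a)) *\<^sub>R (x w - z w))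
        (at w)"
      by (auto intro!: derivative_eq_intros dx dz w)
    also have "exp (2 * a * w) *\<^sub>R (a *\<^sub>R (z w - x w) - a *\<^sub>R (x w - z w))
        + (exp (2 * a * w) * (2 * a)) *\<^sub>R (x w - z w) = 0"
      by (simp add: algebra_simps flip: scaleR_add_left)
    finally show "((\<lambda>v. exp (2 * a * v) *\<^sub>R (x v - z v)) has_vector_derivative 0) (at w)" .
  qed
  then have "x u - z u = (exp (- (2 * a * u)) * exp (2 * a * \<tau> k)) *\<^sub>R (x (\<tau> k) - z (\<tau> k))"
    by (metis (no_types, lifting) exp_minus_inverse mult.commute scaleR_one scaleR_scaleR)
  also have "exp (- (2 * a * u)) * exp (2 * a * \<tau> k) = exp (-2 * a * (u - \<tau> k))"
    by (simp add: exp_add[symmetric] algebra_simps)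
  finally have diff: "x u - z u = exp (-2 * a * (u - \<tau> k)) *\<^sub>R (x (\<tau> k) - z (\<tau> k))" .
  have "x u = (1/2) *\<^sub>R ((x u + z u) + (x u - z u))" "z u = (1/2) *\<^sub>R ((x u + z u) - (x u - z u))"
    by (simp_all add: algebra_simps flip: scaleR_add_left)
  then show ?thesis
    unfolding sum diff by (simp add: flow_scvx_def algebra_simps)
qed

lemma continuized_path_scvx_jump:
  assumes valid: "valid_jump_times \<tau>"
    and path: "continuized_path (\<lambda>t. a) (\<lambda>t. a) (\<lambda>t. 1 / L) (\<lambda>t. c) df x0 z0 \<tau> x z"
  shows "(x (\<tau> (Suc k)), z (\<tau> (Suc k)))
    = jump_scvx df L c (flow_scvx a (\<tau> k) (\<tau> (Suc k)) (x (\<tau> k), z (\<tau> k)))"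
proof -
  have "(x (\<tau> (Suc k)), z (\<tau> (Suc k))) = (let p = flow_scvx a (\<tau> k) (\<tau> (Suc k)) (x (\<tau> k), z (\<tau> k)) in
      (fst p - (1 / L) *\<^sub>R df (fst p), snd p - c *\<^sub>R df (fst p)))"
    unfolding Let_def
  proof (rule continuized_path_jump[OF valid path])
    fix u assume "\<tau> k < u" "u < \<tau> (Suc k)"
    then show "(x u, z u) = flow_scvx a (\<tau> k) u (x (\<tau> k), z (\<tau> k))"
      by (intro continuized_path_scvx_flow[OF path]) auto
  next
    show "isCont (\<lambda>u. flow_scvx a (\<tau> k) u (x (\<tau> k), z (\<tau> k))) (\<tau> (Suc k))"
      unfolding flow_scvx_def by (auto intro!: continuous_intros)
  qed
  then show ?thesis by (simp add: jump_scvx_def Let_def)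
qed

lemma continuized_path_scvx_pdp_path_at:
  assumes valid: "valid_jump_times \<tau>"
    and path: "continuized_path (\<lambda>t. a) (\<lambda>t. a) (\<lambda>t. 1 / L) (\<lambda>t. c) df x0 z0 \<tau> x z"
  shows "pdp_path_at (flow_scvx a) (\<lambda>u. jump_scvx df L c) (x0, z0) \<tau> (\<lambda>u. (x u, z u)) t"
  using path continuized_path_scvx_jump[OF valid path] continuized_path_scvx_flow[OF path]
  by (simp add: pdp_path_at_def continuized_path_def)

lemma lyapunov_scvx_flow_has_real_derivative:
  assumes deriv: "(f has_derivative (\<lambda>h. df \<bullet> h)) (at y)" and flow: "flow_scvx a s u p = (y, z)"
  shows "((\<lambda>u. lyapunov_scvx f \<mu> a xs u (flow_scvx a s u p)) has_real_derivative
    exp (a * u) * (a * scvx_energy f \<mu> xs (y, z) + a * (df \<bullet> (z - y)) + a * \<mu> * ((z - xs) \<bullet> (y - z))))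
    (at u)"
proof -
  define F where "F u = f (fst (flow_scvx a s u p))" for u
  define N where "N u = (norm (snd (flow_scvx a s u p) - xs))\<^sup>2" for u
  have F: "(F has_real_derivative df \<bullet> (a *\<^sub>R (z - y))) (at u)"
    using has_real_derivative_comp_gradient[of f df "\<lambda>u. fst (flow_scvx a s u p)" u, OF _
        flow_scvx_has_vector_derivative(1)] deriv flow
    unfolding F_def by simp
  have N: "(N has_real_derivative 2 * ((z - xs) \<bullet> (a *\<^sub>R (y - z)))) (at u)"
    using has_real_derivative_norm_diff_square[OF flow_scvx_has_vector_derivative(2)[of a s p u], of xs] flow
    unfolding N_def by simp
  have FN: "F u = f y" "N u = (norm (z - xs))\<^sup>2"
    using flow by (simp_all add: F_def N_def)
  have "((\<lambda>u. exp (a * u) * (F u - f xs + \<mu> / 2 * N u)) has_real_derivative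
      exp (a * u) * (a * scvx_energy f \<mu> xs (y, z) + a * (df \<bullet> (z - y)) + a * \<mu> * ((z - xs) \<bullet> (y - z))))
      (at u)"
    by (rule derivative_eq_intros F N refl)+ (simp add: FN scvx_energy_def algebra_simps)
  then show ?thesis
    by (simp add: lyapunov_scvx_def scvx_energy_def F_def N_def)
qed

text \<open>The choice \<open>\<mu> c = a\<close>, \<open>\<mu> c\<^sup>2 = 1 / L\<close> makes the cross terms of the gradient step on \<open>z\<close>
  cancel against the drift, and the remainder is a negative multiple of a square.\<close>
lemma scvx_energy_generator_le:
  fixes f :: "'a::euclidean_space \<Rightarrow> real"
  assumes L: "L > 0" and smooth: "L_smooth L f df" and strong: "strongly_convex \<mu> f df"
    and mu: "0 \<le> \<mu>" and a: "0 \<le> a" and muc: "\<mu> * c = a" and muc2: "\<mu> * c\<^sup>2 = 1 / L"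
  shows "a * scvx_energy f \<mu> xs (y, z) + a * (df y \<bullet> (z - y)) + a * \<mu> * ((z - xs) \<bullet> (y - z))
      + scvx_energy f \<mu> xs (jump_scvx df L c (y, z)) \<le> scvx_energy f \<mu> xs (y, z)"
proof -
  define g where "g = df y"
  define w where "w = z - xs"
  define q where "q = y - xs"
  have descent: "f (y - (1 / L) *\<^sub>R g) \<le> f y - (norm g)\<^sup>2 / (2 * L)"
    unfolding g_def by (rule L_smooth_gradient_step[OF L smooth])
  have strong_at_y: "f y + g \<bullet> (xs - y) + \<mu> / 2 * (norm (xs - y))\<^sup>2 \<le> f xs"
    using strong unfolding strongly_convex_def g_def by blast
  have jump_norm: "(norm (z - c *\<^sub>R g - xs))\<^sup>2 = (norm w)\<^sup>2 - 2 * c * (g \<bullet> w) + c\<^sup>2 * (norm g)\<^sup>2"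
    using norm_diff_scaleR_square[of w c g] by (simp add: w_def algebra_simps)
  have "\<mu>/2 * (norm (z - c *\<^sub>R g - xs))\<^sup>2
      = \<mu>/2 * (norm w)\<^sup>2 - (\<mu> * c) * (g \<bullet> w) + (\<mu> * c\<^sup>2) * (norm g)\<^sup>2 / 2"
    unfolding jump_norm by (simp add: algebra_simps)
  then have jump_z: "\<mu>/2 * (norm (z - c *\<^sub>R g - xs))\<^sup>2 = \<mu>/2 * (norm w)\<^sup>2 - a * (g \<bullet> w) + (norm g)\<^sup>2 / (2 * L)"
    unfolding muc muc2 by simp
  have q: "(norm (xs - y))\<^sup>2 = (norm q)\<^sup>2" by (simp add: q_def norm_minus_commute)
  have g: "g \<bullet> (z - y) = g \<bullet> w + g \<bullet> (xs - y)" by (simp add: w_def inner_diff_right)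
  have w: "w \<bullet> (y - z) = w \<bullet> q - (norm w)\<^sup>2"
    by (simp add: w_def q_def inner_diff_right inner_diff_left power2_norm_eq_inner inner_commute)
  have wq: "(norm (w - q))\<^sup>2 = (norm w)\<^sup>2 - 2 * (w \<bullet> q) + (norm q)\<^sup>2"
    by (simp add: power2_norm_eq_inner inner_diff_right inner_diff_left inner_commute)
  have "a * scvx_energy f \<mu> xs (y, z) + a * (df y \<bullet> (z - y)) + a * \<mu> * ((z - xs) \<bullet> (y - z))
      + scvx_energy f \<mu> xs (jump_scvx df L c (y, z)) - scvx_energy f \<mu> xs (y, z)
    = (f (y - (1 / L) *\<^sub>R g) - f y + (norm g)\<^sup>2 / (2 * L))
      + a * (f y + g \<bullet> (xs - y) + \<mu> / 2 * (norm (xs - y))\<^sup>2 - f xs)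
      - a * \<mu> / 2 * (norm (w - q))\<^sup>2"
    unfolding scvx_energy_def jump_scvx_def fst_conv snd_conv g_def[symmetric] jump_z q g
      w_def[symmetric] w wq
    by (simp add: algebra_simps)
  also have "\<dots> \<le> 0"
  proof -
    have "a * (f y + g \<bullet> (xs - y) + \<mu> / 2 * (norm (xs - y))\<^sup>2 - f xs) \<le> 0"
      using strong_at_y a by (simp add: mult_nonneg_nonpos)
    moreover have "0 \<le> a * \<mu> / 2 * (norm (w - q))\<^sup>2" using a mu by simp
    ultimately show ?thesis using descent by linarith
  qed
  finally show ?thesis by simp
qed

context
  fixes f :: "'a::euclidean_space \<Rightarrow> real" and df :: "'a \<Rightarrow> 'a" and L :: real and xs :: 'a
  assumes convex: "convex_on UNIV f" and deriv: "\<And>x. (f has_derivative (\<lambda>h. df x \<bullet> h)) (at x)"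
    and L: "0 < L" and smooth: "L_smooth L f df" and min: "\<And>x. f xs \<le> f x"
begin

lemma continuous_on_objective_comp [continuous_intros]:
  "continuous_on S g \<Longrightarrow> continuous_on S (\<lambda>x. f (g x))"
  using continuous_on_compose2[of UNIV f S g] deriv
  by (metis continuous_at_imp_continuous_on has_derivative_continuous subset_UNIV)

lemma continuous_on_gradient_comp [continuous_intros]:
  "continuous_on S g \<Longrightarrow> continuous_on S (\<lambda>x. df (g x))"
  using continuous_on_compose2[of UNIV df S g]
    lipschitz_on_continuous_on[OF L_smooth_lipschitz_gradient[OF convex deriv L smooth]]
  by blast

lemma borel_measurable_objective [measurable]: "f \<in> borel_measurable borel"
  using continuous_on_objective_comp[OF continuous_on_id] by (simp add: borel_measurable_continuous_onI)

lemma borel_measurable_gradient [measurable]: "df \<in> borel_measurable borel"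
  using continuous_on_gradient_comp[OF continuous_on_id] by (simp add: borel_measurable_continuous_onI)

lemma supermartingale_step_cvx:
  "supermartingale_step (lyapunov_cvx f L xs) flow_cvx (jump_cvx df L) t"
proof -
  define X :: "real \<Rightarrow> 'a \<times> 'a \<Rightarrow> real \<Rightarrow> 'a" where "X s p u = fst (flow_cvx s u p)" for s p u
  have flow: "flow_cvx s u p = (X s p u, snd p)" for s p u
    by (simp add: X_def flow_cvx_def)
  have X_cont: "continuous_on {s..t} (X s p)" if "0 \<le> s" for s p
  proof (cases "s = 0")
    case True
    then show ?thesis by (simp add: X_def flow_cvx_def)
  next
    case False
    with that have "\<forall>u\<in>{s..t}. u \<noteq> 0" by auto
    then show ?thesis unfolding X_def flow_cvx_def by (auto intro!: continuous_intros)
  qed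
  show ?thesis
  proof (rule supermartingale_stepI[where
        D = "\<lambda>s p u. 2 * u * (f (X s p u) - f xs) + 2 * u * (df (X s p u) \<bullet> (snd p - X s p u))"])
    show "0 \<le> lyapunov_cvx f L xs u p" for u p
      using L min[of "fst p"] by (simp add: lyapunov_cvx_def)
    show "lyapunov_cvx f L xs s (flow_cvx s s p) = lyapunov_cvx f L xs s p" for s p
      by (cases "s = 0") (simp_all add: lyapunov_cvx_def flow_cvx_def)
    show "continuous_on {s..t} (\<lambda>u. lyapunov_cvx f L xs u (flow_cvx s u p))"
      and "continuous_on {s..t} (\<lambda>u. lyapunov_cvx f L xs u (jump_cvx df L u (flow_cvx s u p)))"
      if "0 \<le> s" for s p
      unfolding lyapunov_cvx_def jump_cvx_def flow
      using L by (auto intro!: continuous_intros X_cont[OF that])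
  next
    fix s p u assume "0 \<le> s" "s < u" "u < t"
    then show "((\<lambda>u. lyapunov_cvx f L xs u (flow_cvx s u p)) has_real_derivative
        2 * u * (f (X s p u) - f xs) + 2 * u * (df (X s p u) \<bullet> (snd p - X s p u))) (at u)"
      and "2 * u * (f (X s p u) - f xs) + 2 * u * (df (X s p u) \<bullet> (snd p - X s p u))
        + lyapunov_cvx f L xs u (jump_cvx df L u (flow_cvx s u p)) \<le> lyapunov_cvx f L xs u (flow_cvx s u p)"
      using lyapunov_cvx_flow_has_real_derivative[OF deriv _ flow]
        lyapunov_cvx_generator_le[OF convex deriv L smooth, of u _ xs "snd p"]
      by (simp_all add: flow)
  qed
qed

lemma supermartingale_step_scvx:
  assumes mu: "0 < \<mu>" and strong: "strongly_convex \<mu> f df"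
  shows "supermartingale_step (lyapunov_scvx f \<mu> (sqrt (\<mu> / L)) xs) (flow_scvx (sqrt (\<mu> / L)))
    (\<lambda>u. jump_scvx df L (1 / sqrt (\<mu> * L))) t"
proof -
  define a where "a = sqrt (\<mu> / L)"
  define c where "c = 1 / sqrt (\<mu> * L)"
  have a: "0 \<le> a" using mu L by (simp add: a_def)
  have muc: "\<mu> * c = a"
    using mu L by (simp add: a_def c_def real_sqrt_divide real_sqrt_mult field_simps)
  have muc2: "\<mu> * c\<^sup>2 = 1 / L"
    using mu L by (simp add: c_def power_divide)
  define X :: "real \<Rightarrow> 'a \<times> 'a \<Rightarrow> real \<Rightarrow> 'a" where "X s p u = fst (flow_scvx a s u p)" for s p u
  define Z :: "real \<Rightarrow> 'a \<times> 'a \<Rightarrow> real \<Rightarrow> 'a" where "Z s p u = snd (flow_scvx a s u p)" for s p u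
  have flow: "flow_scvx a s u p = (X s p u, Z s p u)" for s p u
    by (simp add: X_def Z_def)
  have XZ_cont: "continuous_on S (X s p)" "continuous_on S (Z s p)" for S s p
    unfolding X_def Z_def flow_scvx_def by (auto intro!: continuous_intros)
  define D where "D s p u = exp (a * u) * (a * scvx_energy f \<mu> xs (X s p u, Z s p u)
    + a * (df (X s p u) \<bullet> (Z s p u - X s p u)) + a * \<mu> * ((Z s p u - xs) \<bullet> (X s p u - Z s p u)))"
    for s p u
  show ?thesis
    unfolding a_def[symmetric] c_def[symmetric]
  proof (rule supermartingale_stepI[where D = D])
    show "0 \<le> lyapunov_scvx f \<mu> a xs u p" for u p
      using mu min[of "fst p"] by (simp add: lyapunov_scvx_def scvx_energy_def)
    show "lyapunov_scvx f \<mu> a xs s (flow_scvx a s s p) = lyapunov_scvx f \<mu> a xs s p" for s p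
      by simp
    show "continuous_on {s..t} (\<lambda>u. lyapunov_scvx f \<mu> a xs u (flow_scvx a s u p))"
      and "continuous_on {s..t} (\<lambda>u. lyapunov_scvx f \<mu> a xs u (jump_scvx df L c (flow_scvx a s u p)))"
      for s p
      unfolding lyapunov_scvx_def scvx_energy_def jump_scvx_def flow
      by (auto intro!: continuous_intros XZ_cont)
    show "((\<lambda>u. lyapunov_scvx f \<mu> a xs u (flow_scvx a s u p)) has_real_derivative D s p u) (at u)"
      for s p u
      unfolding D_def by (rule lyapunov_scvx_flow_has_real_derivative[OF deriv flow])
    show "D s p u + lyapunov_scvx f \<mu> a xs u (jump_scvx df L c (flow_scvx a s u p))
        \<le> lyapunov_scvx f \<mu> a xs u (flow_scvx a s u p)" for s p u
      using scvx_energy_generator_le[OF L smooth strong _ a muc muc2, of xs "X s p u" "Z s p u"] mu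
      by (simp add: D_def lyapunov_scvx_def flow distrib_left[symmetric])
  qed
qed

lemma continuized_process_cvx_bound:
  assumes "prob_space M" and "poisson_jump_times M T" and t: "0 < t"
    and process: "continuized_process M T (\<lambda>t. 2 / t) (\<lambda>t. 0) (\<lambda>t. 1 / L) (\<lambda>t. t / (2 * L))
      df x0 z0 X Z"
  shows "(\<integral>\<^sup>+w. ennreal (f (X w t) - f xs) \<partial>M) \<le> ennreal (2 * L * (norm (z0 - xs))\<^sup>2 / t\<^sup>2)"
proof -
  have "(\<integral>\<^sup>+w. ennreal (f (X w t) - f xs) \<partial>M)
      \<le> (\<integral>\<^sup>+w. ennreal (1 / t\<^sup>2 * lyapunov_cvx f L xs t (X w t, Z w t)) \<partial>M)"
    using t L by (intro nn_integral_mono ennreal_leI) (simp add: lyapunov_cvx_def field_simps)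
  also have "\<dots> \<le> ennreal (1 / t\<^sup>2 * lyapunov_cvx f L xs 0 (x0, z0))"
  proof (rule nn_integral_pdp_le[where \<phi>="lyapunov_cvx f L xs" and Fl=flow_cvx and J="jump_cvx df L"
        and Y="\<lambda>w u. (X w u, Z w u)", OF _ _ assms(1,2)])
    show "AE w in M. valid_jump_times (\<lambda>k. T k w) \<longrightarrow>
        pdp_path_at flow_cvx (jump_cvx df L) (x0, z0) (\<lambda>k. T k w) (\<lambda>u. (X w u, Z w u)) t"
      using process unfolding continuized_process_def
      by eventually_elim (use continuized_path_cvx_pdp_path_at t in blast)
    show "(\<lambda>q. lyapunov_cvx f L xs t (flow_cvx (fst q) t (snd q))) \<in> borel_measurable (borel \<Otimes>\<^sub>M borel)"
      unfolding lyapunov_cvx_def flow_cvx_def borel_prod[symmetric] by measurable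
    show "(\<lambda>q. (fst (fst q) + snd q, jump_cvx df L (fst (fst q) + snd q)
        (flow_cvx (fst (fst q)) (fst (fst q) + snd q) (snd (fst q)))))
      \<in> (borel \<Otimes>\<^sub>M borel) \<Otimes>\<^sub>M borel \<rightarrow>\<^sub>M borel \<Otimes>\<^sub>M borel"
      unfolding jump_cvx_def flow_cvx_def borel_prod[symmetric] by measurable
    show "0 \<le> lyapunov_cvx f L xs u p" for u p
      using L min[of "fst p"] by (simp add: lyapunov_cvx_def)
  qed (use t supermartingale_step_cvx in auto)
  also have "\<dots> = ennreal (2 * L * (norm (z0 - xs))\<^sup>2 / t\<^sup>2)"
    by (simp add: lyapunov_cvx_def)
  finally show ?thesis .
qed

lemma continuized_process_scvx_bound:
  assumes "prob_space M" and "poisson_jump_times M T" and t: "0 \<le> t"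
    and mu: "0 < \<mu>" and strong: "strongly_convex \<mu> f df"
    and process: "continuized_process M T (\<lambda>t. sqrt (\<mu> / L)) (\<lambda>t. sqrt (\<mu> / L)) (\<lambda>t. 1 / L)
      (\<lambda>t. 1 / sqrt (\<mu> * L)) df x0 z0 X Z"
  shows "(\<integral>\<^sup>+w. ennreal (f (X w t) - f xs) \<partial>M)
    \<le> ennreal ((f x0 - f xs + \<mu> / 2 * (norm (z0 - xs))\<^sup>2) * exp (- sqrt (\<mu> / L) * t))"
proof -
  define a where "a = sqrt (\<mu> / L)"
  define c where "c = 1 / sqrt (\<mu> * L)"
  have "(\<integral>\<^sup>+w. ennreal (f (X w t) - f xs) \<partial>M)
      \<le> (\<integral>\<^sup>+w. ennreal (exp (- a * t) * lyapunov_scvx f \<mu> a xs t (X w t, Z w t)) \<partial>M)"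
    using mu by (intro nn_integral_mono ennreal_leI)
      (simp add: lyapunov_scvx_def scvx_energy_def exp_minus field_simps)
  also have "\<dots> \<le> ennreal (exp (- a * t) * lyapunov_scvx f \<mu> a xs 0 (x0, z0))"
  proof (rule nn_integral_pdp_le[where \<phi>="lyapunov_scvx f \<mu> a xs" and Fl="flow_scvx a"
        and J="\<lambda>u. jump_scvx df L c" and Y="\<lambda>w u. (X w u, Z w u)", OF _ _ assms(1,2) t])
    show "AE w in M. valid_jump_times (\<lambda>k. T k w) \<longrightarrow>
        pdp_path_at (flow_scvx a) (\<lambda>u. jump_scvx df L c) (x0, z0) (\<lambda>k. T k w) (\<lambda>u. (X w u, Z w u)) t"
      using process unfolding continuized_process_def a_def[symmetric] c_def[symmetric]
      by eventually_elim (use continuized_path_scvx_pdp_path_at in blast)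
    show "(\<lambda>q. lyapunov_scvx f \<mu> a xs t (flow_scvx a (fst q) t (snd q))) \<in> borel_measurable (borel \<Otimes>\<^sub>M borel)"
      unfolding lyapunov_scvx_def scvx_energy_def flow_scvx_def borel_prod[symmetric] by measurable
    show "(\<lambda>q. (fst (fst q) + snd q, jump_scvx df L c
        (flow_scvx a (fst (fst q)) (fst (fst q) + snd q) (snd (fst q)))))
      \<in> (borel \<Otimes>\<^sub>M borel) \<Otimes>\<^sub>M borel \<rightarrow>\<^sub>M borel \<Otimes>\<^sub>M borel"
      unfolding jump_scvx_def flow_scvx_def borel_prod[symmetric] by measurable
    show "0 \<le> lyapunov_scvx f \<mu> a xs u p" for u p
      using mu min[of "fst p"] by (simp add: lyapunov_scvx_def scvx_energy_def)
    show "supermartingale_step (lyapunov_scvx f \<mu> a xs) (flow_scvx a) (\<lambda>u. jump_scvx df L c) t"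
      unfolding a_def c_def by (rule supermartingale_step_scvx[OF mu strong])
  qed simp
  also have "\<dots> = ennreal ((f x0 - f xs + \<mu> / 2 * (norm (z0 - xs))\<^sup>2) * exp (- sqrt (\<mu> / L) * t))"
    by (simp add: lyapunov_scvx_def scvx_energy_def a_def mult.commute)
  finally show ?thesis .
qed

end

theorem theorem3:
  fixes f :: "'a::euclidean_space \<Rightarrow> real" and df :: "'a \<Rightarrow> 'a"
    and L :: real and xs x0 z0 :: 'a
    and M :: "'w measure" and T :: "nat \<Rightarrow> 'w \<Rightarrow> real"
  assumes "prob_space M"
    and "poisson_jump_times M T"
    and "convex_on UNIV f"
    and "\<And>x. (f has_derivative (\<lambda>h. df x \<bullet> h)) (at x)"
    and "L > 0"
    and "L_smooth L f df"
    and "\<And>x. f xs \<le> f x"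
  shows
    "(\<forall>X Z. continuized_process M T (\<lambda>t. 2 / t) (\<lambda>t. 0) (\<lambda>t. 1 / L) (\<lambda>t. t / (2 * L))
                df x0 z0 X Z \<longrightarrow>
        (\<forall>t>0. (\<integral>\<^sup>+ w. ennreal (f (X w t) - f xs) \<partial>M)
                  \<le> ennreal (2 * L * (norm (z0 - xs))\<^sup>2 / t\<^sup>2))) \<and>
     (\<forall>\<mu>>0. strongly_convex \<mu> f df \<longrightarrow>
        (\<forall>X Z. continuized_process M T (\<lambda>t. sqrt (\<mu> / L)) (\<lambda>t. sqrt (\<mu> / L))
                  (\<lambda>t. 1 / L) (\<lambda>t. 1 / sqrt (\<mu> * L)) df x0 z0 X Z \<longrightarrow>
          (\<forall>t\<ge>0. (\<integral>\<^sup>+ w. ennreal (f (X w t) - f xs) \<partial>M)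
                  \<le> ennreal ((f x0 - f xs + \<mu> / 2 * (norm (z0 - xs))\<^sup>2) * exp (- sqrt (\<mu> / L) * t)))))"
  using continuized_process_cvx_bound[OF assms(3-7,1,2)]
    continuized_process_scvx_bound[OF assms(3-7,1,2)]
  by blast

end
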